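(* Let $\mathcal{C}$ be a skeletally small triangulated category and $\mathcal{B}$ a radical dense subcategory of $\mathcal{C}$. Let $H$ be the image of $G(\mathcal{B})_{\mathbb{Q}}\to G(\mathcal{C})_{\mathbb{Q}}$, and let $\mathcal{D}$ be the unique maximal element (under inclusion) of the set $\mathcal{I}(H)$ of dense subcategories $\mathcal{D}'$ of $\mathcal{C}$ with $\operatorname{image}(G(\mathcal{D}')_{\mathbb{Q}}\to G(\mathcal{C})_{\mathbb{Q}})=H$. Then $\mathcal{B}=\mathcal{D}$.
   Context: $G(-)$ denotes the Grothendieck group of a triangulated category; $H_{\mathbb{Q}}=H\otimes_{\mathbb{Z}}\mathbb{Q}$. A dense subcategory is a triangulated subcategory $\mathcal{D}$ (full, closed under $[\pm1]$, isomorphisms and cones) such that for every $U\in\mathcal{C}$ there is $V$ with $U\oplus V\in\mathcal{D}$; it is radical if $U^n\in\mathcal{D}$ for some $n\ge1$ implies $U\in\mathcal{D}$. The set $\mathcal{I}(H)$ has a unique maximal element. *)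

theory Defs
  imports Complex_Main
begin

text \<open>A category is given by an object set, a morphism set with source/target,
composition (cmp g f = g after f), identities; the preadditive structure is given by
addition, negation and zero morphisms on each hom set; shO/shM is the shift
functor on objects/morphisms; dtri is the class of distinguished triangles
(f,g,h) with f : X -> Y, g : Y -> Z, h : Z -> X[1].\<close>

record ('o, 'm) tricat =
  Ob :: "'o set"
  Mor :: "'m set"
  src :: "'m \<Rightarrow> 'o"
  tgt :: "'m \<Rightarrow> 'o"
  cmp :: "'m \<Rightarrow> 'm \<Rightarrow> 'm"
  idm :: "'o \<Rightarrow> 'm"
  madd :: "'m \<Rightarrow> 'm \<Rightarrow> 'm"
  mneg :: "'m \<Rightarrow> 'm"
  mzero :: "'o \<Rightarrow> 'o \<Rightarrow> 'm"
  shO :: "'o \<Rightarrow> 'o"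
  shM :: "'m \<Rightarrow> 'm"
  dtri :: "('m \<times> 'm \<times> 'm) set"

definition hom :: "('o, 'm) tricat \<Rightarrow> 'o \<Rightarrow> 'o \<Rightarrow> 'm set" where
  "hom C X Y = {f \<in> Mor C. src C f = X \<and> tgt C f = Y}"

definition is_category :: "('o, 'm) tricat \<Rightarrow> bool" where
  "is_category C \<longleftrightarrow>
     (\<forall>f\<in>Mor C. src C f \<in> Ob C \<and> tgt C f \<in> Ob C) \<and>
     (\<forall>X\<in>Ob C. idm C X \<in> hom C X X) \<and>
     (\<forall>f\<in>Mor C. \<forall>g\<in>Mor C. tgt C f = src C g \<longrightarrow> cmp C g f \<in> hom C (src C f) (tgt C g)) \<and>
     (\<forall>f\<in>Mor C. cmp C f (idm C (src C f)) = f \<and> cmp C (idm C (tgt C f)) f = f) \<and>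
     (\<forall>f\<in>Mor C. \<forall>g\<in>Mor C. \<forall>h\<in>Mor C. tgt C f = src C g \<longrightarrow> tgt C g = src C h \<longrightarrow>
        cmp C h (cmp C g f) = cmp C (cmp C h g) f)"

definition preadditive :: "('o, 'm) tricat \<Rightarrow> bool" where
  "preadditive C \<longleftrightarrow>
     (\<forall>X\<in>Ob C. \<forall>Y\<in>Ob C.
        mzero C X Y \<in> hom C X Y \<and>
        (\<forall>f\<in>hom C X Y. \<forall>g\<in>hom C X Y.
            madd C f g \<in> hom C X Y \<and> madd C f g = madd C g f) \<and>
        (\<forall>f\<in>hom C X Y. \<forall>g\<in>hom C X Y. \<forall>h\<in>hom C X Y.
            madd C (madd C f g) h = madd C f (madd C g h)) \<and>
        (\<forall>f\<in>hom C X Y. mneg C f \<in> hom C X Y \<and> madd C f (mneg C f) = mzero C X Y \<and>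
            madd C f (mzero C X Y) = f)) \<and>
     (\<forall>X\<in>Ob C. \<forall>Y\<in>Ob C. \<forall>Z\<in>Ob C.
        (\<forall>f\<in>hom C X Y. \<forall>g\<in>hom C X Y. \<forall>h\<in>hom C Y Z.
            cmp C h (madd C f g) = madd C (cmp C h f) (cmp C h g)) \<and>
        (\<forall>f\<in>hom C X Y. \<forall>g\<in>hom C Y Z. \<forall>h\<in>hom C Y Z.
            cmp C (madd C g h) f = madd C (cmp C g f) (cmp C h f)))"

definition zero_obj :: "('o, 'm) tricat \<Rightarrow> 'o \<Rightarrow> bool" where
  "zero_obj C Z \<longleftrightarrow> Z \<in> Ob C \<and>
     (\<forall>X\<in>Ob C. (\<exists>!f. f \<in> hom C Z X) \<and> (\<exists>!f. f \<in> hom C X Z))"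

definition is_biprod :: "('o, 'm) tricat \<Rightarrow> 'o \<Rightarrow> 'o \<Rightarrow> 'o \<Rightarrow> bool" where
  "is_biprod C X Y S \<longleftrightarrow> X \<in> Ob C \<and> Y \<in> Ob C \<and> S \<in> Ob C \<and>
     (\<exists>i1\<in>hom C X S. \<exists>i2\<in>hom C Y S. \<exists>p1\<in>hom C S X. \<exists>p2\<in>hom C S Y.
        cmp C p1 i1 = idm C X \<and> cmp C p2 i2 = idm C Y \<and>
        cmp C p2 i1 = mzero C X Y \<and> cmp C p1 i2 = mzero C Y X \<and>
        madd C (cmp C i1 p1) (cmp C i2 p2) = idm C S)"

definition additive :: "('o, 'm) tricat \<Rightarrow> bool" where
  "additive C \<longleftrightarrow> is_category C \<and> preadditive C \<and> (\<exists>Z. zero_obj C Z) \<and>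
     (\<forall>X\<in>Ob C. \<forall>Y\<in>Ob C. \<exists>S. is_biprod C X Y S)"

definition iso_mor :: "('o, 'm) tricat \<Rightarrow> 'm \<Rightarrow> bool" where
  "iso_mor C f \<longleftrightarrow> f \<in> Mor C \<and>
     (\<exists>g\<in>hom C (tgt C f) (src C f). cmp C g f = idm C (src C f) \<and> cmp C f g = idm C (tgt C f))"

definition isomorphic :: "('o, 'm) tricat \<Rightarrow> 'o \<Rightarrow> 'o \<Rightarrow> bool" where
  "isomorphic C X Y \<longleftrightarrow> (\<exists>f\<in>hom C X Y. iso_mor C f)"

definition shift_ok :: "('o, 'm) tricat \<Rightarrow> bool" where
  "shift_ok C \<longleftrightarrow>
     (\<forall>X\<in>Ob C. shO C X \<in> Ob C) \<and>
     (\<forall>X\<in>Ob C. \<forall>Y\<in>Ob C. \<forall>f\<in>hom C X Y. shM C f \<in> hom C (shO C X) (shO C Y)) \<and>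
     (\<forall>X\<in>Ob C. shM C (idm C X) = idm C (shO C X)) \<and>
     (\<forall>f\<in>Mor C. \<forall>g\<in>Mor C. tgt C f = src C g \<longrightarrow> shM C (cmp C g f) = cmp C (shM C g) (shM C f)) \<and>
     (\<forall>X\<in>Ob C. \<forall>Y\<in>Ob C. \<forall>f\<in>hom C X Y. \<forall>g\<in>hom C X Y.
         shM C (madd C f g) = madd C (shM C f) (shM C g)) \<and>
     (\<forall>X\<in>Ob C. \<forall>Y\<in>Ob C. bij_betw (shM C) (hom C X Y) (hom C (shO C X) (shO C Y))) \<and>
     (\<forall>Y\<in>Ob C. \<exists>X\<in>Ob C. isomorphic C (shO C X) Y)"

definition is_tri :: "('o, 'm) tricat \<Rightarrow> 'm \<Rightarrow> 'm \<Rightarrow> 'm \<Rightarrow> bool" where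
  "is_tri C f g h \<longleftrightarrow> f \<in> Mor C \<and> g \<in> Mor C \<and> h \<in> Mor C \<and>
     tgt C f = src C g \<and> tgt C g = src C h \<and> tgt C h = shO C (src C f)"

definition tri_mor :: "('o, 'm) tricat \<Rightarrow> 'm \<Rightarrow> 'm \<Rightarrow> 'm \<Rightarrow> 'm \<Rightarrow> 'm \<Rightarrow> 'm
                       \<Rightarrow> 'm \<Rightarrow> 'm \<Rightarrow> 'm \<Rightarrow> bool" where
  "tri_mor C f g h f' g' h' u v w \<longleftrightarrow>
     u \<in> hom C (src C f) (src C f') \<and> v \<in> hom C (src C g) (src C g') \<and>
     w \<in> hom C (src C h) (src C h') \<and>
     cmp C v f = cmp C f' u \<and> cmp C w g = cmp C g' v \<and> cmp C (shM C u) h = cmp C h' w"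

definition triangulated :: "('o, 'm) tricat \<Rightarrow> bool" where
  "triangulated C \<longleftrightarrow> additive C \<and> shift_ok C \<and>
     (\<forall>f g h. (f, g, h) \<in> dtri C \<longrightarrow> is_tri C f g h) \<and>
     \<comment> \<open>TR1: closure under isomorphism of triangles\<close>
     (\<forall>f g h f' g' h' u v w. (f, g, h) \<in> dtri C \<and> is_tri C f' g' h' \<and>
        tri_mor C f g h f' g' h' u v w \<and> iso_mor C u \<and> iso_mor C v \<and> iso_mor C w
        \<longrightarrow> (f', g', h') \<in> dtri C) \<and>
     \<comment> \<open>TR1: X -> X -> 0 -> X[1] is distinguished\<close>
     (\<forall>X\<in>Ob C. \<exists>Z. zero_obj C Z \<and> (idm C X, mzero C X Z, mzero C Z (shO C X)) \<in> dtri C) \<and>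
     \<comment> \<open>TR1: every morphism extends to a distinguished triangle\<close>
     (\<forall>f\<in>Mor C. \<exists>g h. (f, g, h) \<in> dtri C) \<and>
     \<comment> \<open>TR2: rotation\<close>
     (\<forall>f g h. (f, g, h) \<in> dtri C \<longrightarrow> (g, h, mneg C (shM C f)) \<in> dtri C) \<and>
     \<comment> \<open>TR3: completion of morphisms of triangles\<close>
     (\<forall>f g h f' g' h' u v. (f, g, h) \<in> dtri C \<and> (f', g', h') \<in> dtri C \<and>
        u \<in> hom C (src C f) (src C f') \<and> v \<in> hom C (src C g) (src C g') \<and>
        cmp C v f = cmp C f' u \<longrightarrow> (\<exists>w. tri_mor C f g h f' g' h' u v w)) \<and>
     \<comment> \<open>TR4: octahedral axiom (Stacks Project 05QK)\<close>
     (\<forall>f g p1 d1 p2 d2 p3 d3. f \<in> Mor C \<and> g \<in> Mor C \<and> tgt C f = src C g \<and>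
        (f, p1, d1) \<in> dtri C \<and> (cmp C g f, p2, d2) \<in> dtri C \<and> (g, p3, d3) \<in> dtri C \<longrightarrow>
        (\<exists>a b. a \<in> hom C (tgt C p1) (tgt C p2) \<and> b \<in> hom C (tgt C p2) (tgt C p3) \<and>
           (a, b, cmp C (shM C p1) d3) \<in> dtri C \<and>
           cmp C a p1 = cmp C p2 g \<and> cmp C d2 a = d1 \<and>
           cmp C b p2 = p3 \<and> cmp C d3 b = cmp C (shM C f) d2))"

text \<open>Full triangulated subcategories are identified with their object sets.\<close>
definition tri_sub :: "('o, 'm) tricat \<Rightarrow> 'o set \<Rightarrow> bool" where
  "tri_sub C D \<longleftrightarrow> D \<subseteq> Ob C \<and> (\<exists>Z\<in>D. zero_obj C Z) \<and>
     (\<forall>X\<in>D. \<forall>Y\<in>Ob C. isomorphic C X Y \<longrightarrow> Y \<in> D) \<and>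
     (\<forall>X\<in>Ob C. X \<in> D \<longleftrightarrow> shO C X \<in> D) \<and>
     (\<forall>f g h. (f, g, h) \<in> dtri C \<and> src C f \<in> D \<and> src C g \<in> D \<longrightarrow> src C h \<in> D)"

definition dense_sub :: "('o, 'm) tricat \<Rightarrow> 'o set \<Rightarrow> bool" where
  "dense_sub C D \<longleftrightarrow> tri_sub C D \<and>
     (\<forall>U\<in>Ob C. \<exists>V\<in>Ob C. \<exists>S\<in>D. is_biprod C U V S)"

primrec npow :: "('o, 'm) tricat \<Rightarrow> 'o \<Rightarrow> nat \<Rightarrow> 'o \<Rightarrow> bool" where
  "npow C U 0 S = zero_obj C S"
| "npow C U (Suc n) S = (\<exists>T\<in>Ob C. npow C U n T \<and> is_biprod C T U S)"

definition radical :: "('o, 'm) tricat \<Rightarrow> 'o set \<Rightarrow> bool" where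
  "radical C D \<longleftrightarrow> (\<forall>U\<in>Ob C. \<forall>n S. n \<ge> 1 \<and> npow C U n S \<and> S \<in> D \<longrightarrow> U \<in> D)"

text \<open>G(C)_Q is the quotient of the Q-vector space of finitely supported
rational combinations of objects by the span of the triangle relations.
A subspace of G(C)_Q is represented by its preimage in the free space.\<close>

definition delta :: "'o \<Rightarrow> 'o \<Rightarrow> rat" where
  "delta X = (\<lambda>Y. if Y = X then 1 else 0)"

definition qspan :: "('o \<Rightarrow> rat) set \<Rightarrow> ('o \<Rightarrow> rat) set" where
  "qspan S = {v. \<exists>F c. finite F \<and> F \<subseteq> S \<and> v = (\<lambda>x. \<Sum>s\<in>F. c s * s x)}"

definition tri_rels :: "('o, 'm) tricat \<Rightarrow> ('o \<Rightarrow> rat) set" where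
  "tri_rels C = {(\<lambda>x. delta (src C f) x - delta (src C g) x + delta (src C h) x) | f g h.
                   (f, g, h) \<in> dtri C}"

text \<open>Preimage in the free space of image(G(D)_Q -> G(C)_Q).\<close>
definition gimgQ :: "('o, 'm) tricat \<Rightarrow> 'o set \<Rightarrow> ('o \<Rightarrow> rat) set" where
  "gimgQ C D = qspan (delta ` D \<union> tri_rels C)"

definition Iset :: "('o, 'm) tricat \<Rightarrow> ('o \<Rightarrow> rat) set \<Rightarrow> 'o set set" where
  "Iset C H = {D. dense_sub C D \<and> gimgQ C D = H}"

definition maximal_in :: "'a set set \<Rightarrow> 'a set \<Rightarrow> bool" where
  "maximal_in S D \<longleftrightarrow> D \<in> S \<and> (\<forall>D'\<in>S. D \<subseteq> D' \<longrightarrow> D' = D)"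

end

theory Submission
  imports Defs "HOL-Algebra.FiniteProduct" "HOL-Library.Function_Algebras"
begin

text \<open>Following Thomason, a dense subcategory \<open>B\<close> yields an abelian group: objects modulo
  \<open>X \<sim> Y \<longleftrightarrow> X \<oplus> P \<cong> Y \<oplus> Q\<close> for some \<open>P, Q \<in> B\<close>, multiplied by direct sum. Density makes
  every class invertible, the class of \<open>X\<close> is trivial iff \<open>X \<in> B\<close>, and the octahedral axiom gives
  \<open>[Y] = [X][Z]\<close> for every distinguished triangle \<open>X \<rightarrow> Y \<rightarrow> Z \<rightarrow> X[1]\<close>. So taking classes is a
  homomorphism on integral combinations of objects which kills \<open>B\<close> and the triangle relations. If
  the class of \<open>U\<close> in \<open>G(C)\<^sub>\<bbbQ>\<close> lies in \<open>H\<close>, clearing denominators gives \<open>[U]\<^sup>N = 1\<close> in that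
  group, i.e. \<open>U\<^sup>N \<in> B\<close>, and \<open>U \<in> B\<close> since \<open>B\<close> is radical. Hence \<open>B\<close> consists of the objects whose
  class lies in \<open>H\<close>, and this set is the maximal element of \<open>I(H)\<close>: it is a dense triangulated
  subcategory with image \<open>H\<close>, and it contains every member of \<open>I(H)\<close>.\<close>

locale triangulated_category =
  fixes C :: "('o, 'm) tricat"
  assumes triangulated: "triangulated C"
begin

abbreviation Hom :: "'o \<Rightarrow> 'o \<Rightarrow> 'm set" where
  "Hom X Y \<equiv> Defs.hom C X Y"

lemma hom_iff: "f \<in> Hom X Y \<longleftrightarrow> f \<in> Mor C \<and> src C f = X \<and> tgt C f = Y"
  by (simp add: Defs.hom_def)

lemma is_category: "is_category C"
  and preadditive: "preadditive C"
  and shift_ok: "shift_ok C"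
  using triangulated by (simp_all add: triangulated_def additive_def)

section \<open>Preadditive categories\<close>

lemma hom_ob: "f \<in> Hom X Y \<Longrightarrow> X \<in> Ob C \<and> Y \<in> Ob C"
  using is_category by (auto simp: is_category_def hom_iff)

lemma id_hom: "X \<in> Ob C \<Longrightarrow> idm C X \<in> Hom X X"
  using is_category by (simp add: is_category_def)

lemma cmp_hom: "f \<in> Hom X Y \<Longrightarrow> g \<in> Hom Y Z \<Longrightarrow> cmp C g f \<in> Hom X Z"
  using is_category unfolding is_category_def by (auto simp: hom_iff)

lemma cmp_id_left: "f \<in> Hom X Y \<Longrightarrow> cmp C (idm C Y) f = f"
  using is_category unfolding is_category_def by (auto simp: hom_iff)

lemma cmp_id_right: "f \<in> Hom X Y \<Longrightarrow> cmp C f (idm C X) = f"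
  using is_category unfolding is_category_def by (auto simp: hom_iff)

lemma cmp_assoc:
  "f \<in> Hom X Y \<Longrightarrow> g \<in> Hom Y Z \<Longrightarrow> h \<in> Hom Z W \<Longrightarrow>
   cmp C (cmp C h g) f = cmp C h (cmp C g f)"
  using is_category unfolding is_category_def by (auto simp: hom_iff)

lemma zero_hom: "X \<in> Ob C \<Longrightarrow> Y \<in> Ob C \<Longrightarrow> mzero C X Y \<in> Hom X Y"
  using preadditive by (simp add: preadditive_def)

lemma add_hom: "f \<in> Hom X Y \<Longrightarrow> g \<in> Hom X Y \<Longrightarrow> madd C f g \<in> Hom X Y"
  using preadditive hom_ob unfolding preadditive_def by blast

lemma add_commute: "f \<in> Hom X Y \<Longrightarrow> g \<in> Hom X Y \<Longrightarrow> madd C f g = madd C g f"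
  using preadditive hom_ob unfolding preadditive_def by blast

lemma add_assoc:
  "f \<in> Hom X Y \<Longrightarrow> g \<in> Hom X Y \<Longrightarrow> h \<in> Hom X Y \<Longrightarrow>
   madd C (madd C f g) h = madd C f (madd C g h)"
  using preadditive hom_ob unfolding preadditive_def by blast

lemma neg_hom: "f \<in> Hom X Y \<Longrightarrow> mneg C f \<in> Hom X Y"
  using preadditive hom_ob unfolding preadditive_def by blast

lemma add_neg_right: "f \<in> Hom X Y \<Longrightarrow> madd C f (mneg C f) = mzero C X Y"
  using preadditive hom_ob unfolding preadditive_def by blast

lemma add_zero_right: "f \<in> Hom X Y \<Longrightarrow> madd C f (mzero C X Y) = f"
  using preadditive hom_ob unfolding preadditive_def by blast

lemma add_zero_left: "f \<in> Hom X Y \<Longrightarrow> madd C (mzero C X Y) f = f"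
  using add_zero_right add_commute zero_hom hom_ob by metis

lemma add_neg_left: "f \<in> Hom X Y \<Longrightarrow> madd C (mneg C f) f = mzero C X Y"
  using add_neg_right add_commute neg_hom by metis

lemma cmp_distrib_left:
  "f \<in> Hom X Y \<Longrightarrow> g \<in> Hom X Y \<Longrightarrow> h \<in> Hom Y Z \<Longrightarrow>
   cmp C h (madd C f g) = madd C (cmp C h f) (cmp C h g)"
  using preadditive hom_ob unfolding preadditive_def by blast

lemma cmp_distrib_right:
  "f \<in> Hom X Y \<Longrightarrow> g \<in> Hom Y Z \<Longrightarrow> h \<in> Hom Y Z \<Longrightarrow>
   cmp C (madd C g h) f = madd C (cmp C g f) (cmp C h f)"
  using preadditive hom_ob unfolding preadditive_def by blast

lemma add_neg_cancel_right: "a \<in> Hom X Y \<Longrightarrow> b \<in> Hom X Y \<Longrightarrow> madd C (madd C a b) (mneg C b) = a"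
  by (simp add: add_assoc add_neg_right add_zero_right neg_hom)

lemma add_neg_add_cancel: "a \<in> Hom X Y \<Longrightarrow> b \<in> Hom X Y \<Longrightarrow> madd C (madd C a (mneg C b)) b = a"
  by (simp add: add_assoc add_neg_left add_zero_right neg_hom)

lemma add_right_imp_eq:
  assumes "f \<in> Hom X Y" "g \<in> Hom X Y" "k \<in> Hom X Y" "madd C f k = madd C g k"
  shows "f = g"
  using add_neg_cancel_right[OF assms(1,3)] add_neg_cancel_right[OF assms(2,3)] assms(4) by metis

lemma add_left_imp_eq:
  assumes "f \<in> Hom X Y" "g \<in> Hom X Y" "k \<in> Hom X Y" "madd C k f = madd C k g"
  shows "f = g"
  using add_right_imp_eq[OF assms(1-3)] assms add_commute by metis

lemma add_self_imp_zero: "f \<in> Hom X Y \<Longrightarrow> madd C f f = f \<Longrightarrow> f = mzero C X Y"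
  using add_right_imp_eq zero_hom add_zero_left hom_ob by metis

lemma cmp_zero_right:
  assumes h: "h \<in> Hom Y Z" and X: "X \<in> Ob C"
  shows "cmp C h (mzero C X Y) = mzero C X Z"
proof -
  have z: "mzero C X Y \<in> Hom X Y" using X h hom_ob zero_hom by blast
  then have "cmp C h (mzero C X Y) = madd C (cmp C h (mzero C X Y)) (cmp C h (mzero C X Y))"
    using cmp_distrib_left[OF z z h] add_zero_right by simp
  then show ?thesis using add_self_imp_zero cmp_hom z h by metis
qed

lemma cmp_zero_left:
  assumes f: "f \<in> Hom X Y" and Z: "Z \<in> Ob C"
  shows "cmp C (mzero C Y Z) f = mzero C X Z"
proof -
  have z: "mzero C Y Z \<in> Hom Y Z" using Z f hom_ob zero_hom by blast
  then have "cmp C (mzero C Y Z) f = madd C (cmp C (mzero C Y Z) f) (cmp C (mzero C Y Z) f)"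
    using cmp_distrib_right[OF f z z] add_zero_right by simp
  then show ?thesis using add_self_imp_zero cmp_hom z f by metis
qed

lemma neg_unique: "f \<in> Hom X Y \<Longrightarrow> g \<in> Hom X Y \<Longrightarrow> madd C f g = mzero C X Y \<Longrightarrow> g = mneg C f"
  using add_left_imp_eq neg_hom add_neg_right by metis

lemma neg_neg: "f \<in> Hom X Y \<Longrightarrow> mneg C (mneg C f) = f"
  using neg_unique neg_hom add_neg_left by metis

lemma neg_zero: "X \<in> Ob C \<Longrightarrow> Y \<in> Ob C \<Longrightarrow> mneg C (mzero C X Y) = mzero C X Y"
  using neg_unique zero_hom add_zero_right by metis

lemma eq_if_add_neg_eq_zero:
  "a \<in> Hom X Y \<Longrightarrow> b \<in> Hom X Y \<Longrightarrow> madd C a (mneg C b) = mzero C X Y \<Longrightarrow> a = b"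
  using neg_unique neg_neg neg_hom by metis

lemma cmp_neg_right:
  assumes "f \<in> Hom X Y" "h \<in> Hom Y Z"
  shows "cmp C h (mneg C f) = mneg C (cmp C h f)"
proof -
  have "madd C (cmp C h f) (cmp C h (mneg C f)) = cmp C h (mzero C X Y)"
    using cmp_distrib_left[OF assms(1) neg_hom[OF assms(1)] assms(2)] add_neg_right assms by simp
  also have "\<dots> = mzero C X Z" using cmp_zero_right assms hom_ob by blast
  finally show ?thesis using neg_unique cmp_hom neg_hom assms by metis
qed

lemma cmp_neg_left:
  assumes "f \<in> Hom X Y" "h \<in> Hom Y Z"
  shows "cmp C (mneg C h) f = mneg C (cmp C h f)"
proof -
  have "madd C (cmp C h f) (cmp C (mneg C h) f) = cmp C (mzero C Y Z) f"
    using cmp_distrib_right[OF assms(1) assms(2) neg_hom[OF assms(2)]] add_neg_right assms by simp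
  also have "\<dots> = mzero C X Z" using cmp_zero_left assms hom_ob by blast
  finally show ?thesis using neg_unique cmp_hom neg_hom assms by metis
qed

lemma zero_obj_ob: "zero_obj C Z \<Longrightarrow> Z \<in> Ob C"
  by (simp add: zero_obj_def)

lemma hom_from_zero_obj: "zero_obj C Z \<Longrightarrow> f \<in> Hom Z X \<Longrightarrow> f = mzero C Z X"
  unfolding zero_obj_def using zero_hom hom_ob by metis

lemma zero_obj_id: "zero_obj C Z \<Longrightarrow> idm C Z = mzero C Z Z"
  using hom_from_zero_obj id_hom zero_obj_ob by metis

lemma iso_morI:
  "f \<in> Hom X Y \<Longrightarrow> g \<in> Hom Y X \<Longrightarrow> cmp C g f = idm C X \<Longrightarrow> cmp C f g = idm C Y \<Longrightarrow> iso_mor C f"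
  unfolding iso_mor_def by (auto simp: hom_iff)

lemma iso_mor_id: "X \<in> Ob C \<Longrightarrow> iso_mor C (idm C X)"
  using iso_morI id_hom cmp_id_left by metis

lemma isomorphicE:
  assumes "isomorphic C X Y"
  obtains f g where "f \<in> Hom X Y" "g \<in> Hom Y X" "cmp C g f = idm C X" "cmp C f g = idm C Y"
proof -
  obtain f where f: "f \<in> Hom X Y" "iso_mor C f" using assms unfolding isomorphic_def by blast
  then obtain g where "g \<in> Hom Y X" "cmp C g f = idm C X" "cmp C f g = idm C Y"
    unfolding iso_mor_def by (auto simp: hom_iff)
  then show ?thesis using that f by blast
qed

lemma isomorphicI:
  "f \<in> Hom X Y \<Longrightarrow> g \<in> Hom Y X \<Longrightarrow> cmp C g f = idm C X \<Longrightarrow> cmp C f g = idm C Y \<Longrightarrow> isomorphic C X Y"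
  unfolding isomorphic_def using iso_morI by blast

lemma isomorphic_ob: "isomorphic C X Y \<Longrightarrow> X \<in> Ob C \<and> Y \<in> Ob C"
  by (metis isomorphicE hom_ob)

lemma isomorphic_refl: "X \<in> Ob C \<Longrightarrow> isomorphic C X X"
  using isomorphicI id_hom cmp_id_left by metis

lemma isomorphic_sym: "isomorphic C X Y \<Longrightarrow> isomorphic C Y X"
  by (metis isomorphicE isomorphicI)

lemma isomorphic_trans:
  assumes "isomorphic C X Y" "isomorphic C Y Z"
  shows "isomorphic C X Z"
proof -
  obtain f g where fg: "f \<in> Hom X Y" "g \<in> Hom Y X" "cmp C g f = idm C X" "cmp C f g = idm C Y"
    using assms(1) isomorphicE by blast
  obtain f' g' where
    fg': "f' \<in> Hom Y Z" "g' \<in> Hom Z Y" "cmp C g' f' = idm C Y" "cmp C f' g' = idm C Z"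
    using assms(2) isomorphicE by blast
  have "cmp C (cmp C g g') (cmp C f' f) = cmp C g (cmp C (cmp C g' f') f)"
    using cmp_assoc[OF cmp_hom[OF fg(1) fg'(1)] fg'(2) fg(2)] cmp_assoc[OF fg(1) fg'(1) fg'(2)]
      by simp
  then have 1: "cmp C (cmp C g g') (cmp C f' f) = idm C X"
    using fg fg' cmp_id_left by simp
  have "cmp C (cmp C f' f) (cmp C g g') = cmp C f' (cmp C (cmp C f g) g')"
    using cmp_assoc[OF cmp_hom[OF fg'(2) fg(2)] fg(1) fg'(1)] cmp_assoc[OF fg'(2) fg(2) fg(1)]
      by simp
  then have 2: "cmp C (cmp C f' f) (cmp C g g') = idm C Z"
    using fg fg' cmp_id_left by simp
  show ?thesis using isomorphicI[OF cmp_hom cmp_hom 1 2] fg fg' by blast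
qed

section \<open>The shift functor and distinguished triangles\<close>

lemma shift_ob: "X \<in> Ob C \<Longrightarrow> shO C X \<in> Ob C"
  using shift_ok by (simp add: shift_ok_def)

lemma shift_hom: "f \<in> Hom X Y \<Longrightarrow> shM C f \<in> Hom (shO C X) (shO C Y)"
  using shift_ok hom_ob unfolding shift_ok_def by blast

lemma shift_id: "X \<in> Ob C \<Longrightarrow> shM C (idm C X) = idm C (shO C X)"
  using shift_ok by (simp add: shift_ok_def)

lemma shift_cmp: "f \<in> Hom X Y \<Longrightarrow> g \<in> Hom Y Z \<Longrightarrow> shM C (cmp C g f) = cmp C (shM C g) (shM C f)"
  using shift_ok unfolding shift_ok_def by (auto simp: hom_iff)

lemma shift_add: "f \<in> Hom X Y \<Longrightarrow> g \<in> Hom X Y \<Longrightarrow> shM C (madd C f g) = madd C (shM C f) (shM C g)"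
  using shift_ok hom_ob unfolding shift_ok_def by blast

lemma shift_inj: "f \<in> Hom X Y \<Longrightarrow> g \<in> Hom X Y \<Longrightarrow> shM C f = shM C g \<Longrightarrow> f = g"
  using shift_ok hom_ob unfolding shift_ok_def bij_betw_def inj_on_def by metis

lemma shift_surj: "X \<in> Ob C \<Longrightarrow> Y \<in> Ob C \<Longrightarrow> g \<in> Hom (shO C X) (shO C Y) \<Longrightarrow> \<exists>f\<in>Hom X Y. shM C f = g"
  using shift_ok unfolding shift_ok_def bij_betw_def by (metis imageE)

lemma shift_ess_surj: "Y \<in> Ob C \<Longrightarrow> \<exists>X\<in>Ob C. isomorphic C (shO C X) Y"
  using shift_ok by (simp add: shift_ok_def)

lemma shift_zero:
  assumes "X \<in> Ob C" "Y \<in> Ob C"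
  shows "shM C (mzero C X Y) = mzero C (shO C X) (shO C Y)"
proof -
  have z: "mzero C X Y \<in> Hom X Y" using assms zero_hom by blast
  have "shM C (mzero C X Y) = madd C (shM C (mzero C X Y)) (shM C (mzero C X Y))"
    using shift_add[OF z z] add_zero_right[OF z] by simp
  then show ?thesis using add_self_imp_zero shift_hom z by metis
qed

lemma isomorphic_shiftD:
  assumes "isomorphic C (shO C X) (shO C Y)" "X \<in> Ob C" "Y \<in> Ob C"
  shows "isomorphic C X Y"
proof -
  obtain f' g' where fg: "f' \<in> Hom (shO C X) (shO C Y)" "g' \<in> Hom (shO C Y) (shO C X)"
    "cmp C g' f' = idm C (shO C X)" "cmp C f' g' = idm C (shO C Y)"
    using assms isomorphicE by blast
  obtain f where f: "f \<in> Hom X Y" "shM C f = f'" using shift_surj assms fg by blast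
  obtain g where g: "g \<in> Hom Y X" "shM C g = g'" using shift_surj assms fg by blast
  have "cmp C g f = idm C X"
    using shift_inj[OF cmp_hom[OF f(1) g(1)] id_hom[OF assms(2)]] shift_cmp[OF f(1) g(1)]
      f g fg shift_id assms
    by metis
  moreover have "cmp C f g = idm C Y"
    using shift_inj[OF cmp_hom[OF g(1) f(1)] id_hom[OF assms(3)]] shift_cmp[OF g(1) f(1)]
      f g fg shift_id assms
    by metis
  ultimately show ?thesis using isomorphicI f g by blast
qed

text \<open>The lemmas on hom-sets restated for morphisms with explicit sources and targets, so that
  the simplifier can discharge the typing side conditions.\<close>

lemma cmp_mor: "f \<in> Mor C \<Longrightarrow> g \<in> Mor C \<Longrightarrow> tgt C f = src C g \<Longrightarrow> cmp C g f \<in> Mor C"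
  using cmp_hom[of f "src C f" "tgt C f" g "tgt C g"] by (simp add: hom_iff)
lemma src_cmp: "f \<in> Mor C \<Longrightarrow> g \<in> Mor C \<Longrightarrow> tgt C f = src C g \<Longrightarrow> src C (cmp C g f) = src C f"
  using cmp_hom[of f "src C f" "tgt C f" g "tgt C g"] by (simp add: hom_iff)
lemma tgt_cmp: "f \<in> Mor C \<Longrightarrow> g \<in> Mor C \<Longrightarrow> tgt C f = src C g \<Longrightarrow> tgt C (cmp C g f) = tgt C g"
  using cmp_hom[of f "src C f" "tgt C f" g "tgt C g"] by (simp add: hom_iff)
lemma id_mor: "X \<in> Ob C \<Longrightarrow> idm C X \<in> Mor C" using id_hom by (simp add: hom_iff)
lemma src_id: "X \<in> Ob C \<Longrightarrow> src C (idm C X) = X" using id_hom by (simp add: hom_iff)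
lemma tgt_id: "X \<in> Ob C \<Longrightarrow> tgt C (idm C X) = X" using id_hom by (simp add: hom_iff)
lemma zero_mor: "X \<in> Ob C \<Longrightarrow> Y \<in> Ob C \<Longrightarrow> mzero C X Y \<in> Mor C" using zero_hom by (simp add: hom_iff)
lemma src_zero: "X \<in> Ob C \<Longrightarrow> Y \<in> Ob C \<Longrightarrow> src C (mzero C X Y) = X"
  using zero_hom by (simp add: hom_iff)
lemma tgt_zero: "X \<in> Ob C \<Longrightarrow> Y \<in> Ob C \<Longrightarrow> tgt C (mzero C X Y) = Y"
  using zero_hom by (simp add: hom_iff)
lemma add_mor: "f \<in> Mor C \<Longrightarrow> g \<in> Mor C \<Longrightarrow> src C f = src C g \<Longrightarrow> tgt C f = tgt C g \<Longrightarrow> madd C f g \<in> Mor C"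
  using add_hom[of f "src C f" "tgt C f" g] by (simp add: hom_iff)
lemma src_add: "f \<in> Mor C \<Longrightarrow> g \<in> Mor C \<Longrightarrow> src C f = src C g \<Longrightarrow> tgt C f = tgt C g \<Longrightarrow>
  src C (madd C f g) = src C f"
  using add_hom[of f "src C f" "tgt C f" g] by (simp add: hom_iff)
lemma tgt_add: "f \<in> Mor C \<Longrightarrow> g \<in> Mor C \<Longrightarrow> src C f = src C g \<Longrightarrow> tgt C f = tgt C g \<Longrightarrow>
  tgt C (madd C f g) = tgt C f"
  using add_hom[of f "src C f" "tgt C f" g] by (simp add: hom_iff)
lemma neg_mor: "f \<in> Mor C \<Longrightarrow> mneg C f \<in> Mor C"
  using neg_hom[of f "src C f" "tgt C f"] by (simp add: hom_iff)
lemma src_neg: "f \<in> Mor C \<Longrightarrow> src C (mneg C f) = src C f"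
  using neg_hom[of f "src C f" "tgt C f"] by (simp add: hom_iff)
lemma tgt_neg: "f \<in> Mor C \<Longrightarrow> tgt C (mneg C f) = tgt C f"
  using neg_hom[of f "src C f" "tgt C f"] by (simp add: hom_iff)
lemma cmp_assoc_mor: "f \<in> Mor C \<Longrightarrow> g \<in> Mor C \<Longrightarrow> h \<in> Mor C \<Longrightarrow> tgt C f = src C g \<Longrightarrow> tgt C g = src C h \<Longrightarrow>
  cmp C (cmp C h g) f = cmp C h (cmp C g f)"
  using cmp_assoc[of f "src C f" "tgt C f" g "tgt C g" h "tgt C h"] by (simp add: hom_iff)
lemma cmp_id_left_mor: "f \<in> Mor C \<Longrightarrow> tgt C f = Y \<Longrightarrow> cmp C (idm C Y) f = f"
  using cmp_id_left[of f "src C f" "tgt C f"] by (simp add: hom_iff)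
lemma cmp_id_right_mor: "f \<in> Mor C \<Longrightarrow> src C f = X \<Longrightarrow> cmp C f (idm C X) = f"
  using cmp_id_right[of f "src C f" "tgt C f"] by (simp add: hom_iff)
lemma cmp_zero_left_mor: "f \<in> Mor C \<Longrightarrow> tgt C f = Y \<Longrightarrow> Z \<in> Ob C \<Longrightarrow>
  cmp C (mzero C Y Z) f = mzero C (src C f) Z"
  using cmp_zero_left[of f "src C f" "tgt C f" Z] by (simp add: hom_iff)
lemma cmp_zero_right_mor: "h \<in> Mor C \<Longrightarrow> src C h = Y \<Longrightarrow> X \<in> Ob C \<Longrightarrow>
  cmp C h (mzero C X Y) = mzero C X (tgt C h)"
  using cmp_zero_right[of h "src C h" "tgt C h" X] by (simp add: hom_iff)
lemma cmp_distrib_left_mor: "f \<in> Mor C \<Longrightarrow> g \<in> Mor C \<Longrightarrow> h \<in> Mor C \<Longrightarrow> src C f = src C g \<Longrightarrow>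
  tgt C f = tgt C g \<Longrightarrow>
  tgt C f = src C h \<Longrightarrow> cmp C h (madd C f g) = madd C (cmp C h f) (cmp C h g)"
  using cmp_distrib_left[of f "src C f" "tgt C f" g h "tgt C h"] by (simp add: hom_iff)
lemma cmp_distrib_right_mor: "f \<in> Mor C \<Longrightarrow> g \<in> Mor C \<Longrightarrow> h \<in> Mor C \<Longrightarrow> src C g = src C h \<Longrightarrow>
  tgt C g = tgt C h \<Longrightarrow>
  tgt C f = src C g \<Longrightarrow> cmp C (madd C g h) f = madd C (cmp C g f) (cmp C h f)"
  using cmp_distrib_right[of f "src C f" "tgt C f" g "tgt C g" h] by (simp add: hom_iff)
lemma add_zero_right_mor: "f \<in> Mor C \<Longrightarrow> src C f = X \<Longrightarrow> tgt C f = Y \<Longrightarrow> madd C f (mzero C X Y) = f"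
  using add_zero_right[of f X Y] by (simp add: hom_iff)
lemma add_zero_left_mor: "f \<in> Mor C \<Longrightarrow> src C f = X \<Longrightarrow> tgt C f = Y \<Longrightarrow> madd C (mzero C X Y) f = f"
  using add_zero_left[of f X Y] by (simp add: hom_iff)
lemma cmp_neg_left_mor: "f \<in> Mor C \<Longrightarrow> h \<in> Mor C \<Longrightarrow> tgt C f = src C h \<Longrightarrow>
  cmp C (mneg C h) f = mneg C (cmp C h f)"
  using cmp_neg_left[of f "src C f" "tgt C f" h "tgt C h"] by (simp add: hom_iff)
lemma cmp_neg_right_mor: "f \<in> Mor C \<Longrightarrow> h \<in> Mor C \<Longrightarrow> tgt C f = src C h \<Longrightarrow>
  cmp C h (mneg C f) = mneg C (cmp C h f)"
  using cmp_neg_right[of f "src C f" "tgt C f" h "tgt C h"] by (simp add: hom_iff)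
lemma add_neg_right_mor: "f \<in> Mor C \<Longrightarrow> madd C f (mneg C f) = mzero C (src C f) (tgt C f)"
  using add_neg_right[of f "src C f" "tgt C f"] by (simp add: hom_iff)
lemma shift_mor: "f \<in> Mor C \<Longrightarrow> shM C f \<in> Mor C"
  using shift_hom[of f "src C f" "tgt C f"] by (simp add: hom_iff)
lemma src_shift: "f \<in> Mor C \<Longrightarrow> src C (shM C f) = shO C (src C f)"
  using shift_hom[of f "src C f" "tgt C f"] by (simp add: hom_iff)

lemmas mor_simps =
  cmp_mor src_cmp tgt_cmp id_mor src_id tgt_id zero_mor src_zero tgt_zero
  add_mor src_add tgt_add neg_mor src_neg tgt_neg
  cmp_assoc_mor cmp_id_left_mor cmp_id_right_mor cmp_zero_left_mor cmp_zero_right_mor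
  cmp_distrib_left_mor cmp_distrib_right_mor add_zero_right_mor add_zero_left_mor
  cmp_neg_left_mor cmp_neg_right_mor neg_zero add_neg_right_mor

lemma cmp_eq_extend:
  "cmp C p i = r \<Longrightarrow> z \<in> Mor C \<Longrightarrow> i \<in> Mor C \<Longrightarrow> p \<in> Mor C \<Longrightarrow>
   tgt C i = src C p \<Longrightarrow> tgt C z = src C i \<Longrightarrow> cmp C p (cmp C i z) = cmp C r z"
  using cmp_assoc_mor by metis

lemma dtri_is_tri: "(f, g, h) \<in> dtri C \<Longrightarrow> is_tri C f g h"
  using triangulated unfolding triangulated_def by (elim conjE) blast

lemma dtri_iso_closed:
  "(f, g, h) \<in> dtri C \<Longrightarrow> is_tri C f' g' h' \<Longrightarrow> tri_mor C f g h f' g' h' u v w \<Longrightarrow>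
   iso_mor C u \<Longrightarrow> iso_mor C v \<Longrightarrow> iso_mor C w \<Longrightarrow> (f', g', h') \<in> dtri C"
  using triangulated unfolding triangulated_def by (elim conjE) blast

lemma dtri_id:
  "X \<in> Ob C \<Longrightarrow> \<exists>Z. zero_obj C Z \<and> (idm C X, mzero C X Z, mzero C Z (shO C X)) \<in> dtri C"
  using triangulated unfolding triangulated_def by (elim conjE) blast

lemma dtri_exists: "f \<in> Mor C \<Longrightarrow> \<exists>g h. (f, g, h) \<in> dtri C"
  using triangulated unfolding triangulated_def by (elim conjE) blast

lemma dtri_rotate: "(f, g, h) \<in> dtri C \<Longrightarrow> (g, h, mneg C (shM C f)) \<in> dtri C"
  using triangulated unfolding triangulated_def by (elim conjE) blast

lemma dtri_complete_mor:
  assumes "(f, g, h) \<in> dtri C" "(f', g', h') \<in> dtri C"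
    "u \<in> Hom (src C f) (src C f')" "v \<in> Hom (src C g) (src C g')" "cmp C v f = cmp C f' u"
  shows "\<exists>w. tri_mor C f g h f' g' h' u v w"
proof -
  have "\<forall>f g h f' g' h' u v. (f, g, h) \<in> dtri C \<and> (f', g', h') \<in> dtri C \<and>
      u \<in> Hom (src C f) (src C f') \<and> v \<in> Hom (src C g) (src C g') \<and>
      cmp C v f = cmp C f' u \<longrightarrow> (\<exists>w. tri_mor C f g h f' g' h' u v w)"
    using triangulated unfolding triangulated_def by (elim conjE) assumption
  then show ?thesis using assms by blast
qed

lemma dtri_octahedral:
  assumes "f \<in> Mor C" "g \<in> Mor C" "tgt C f = src C g"
    "(f, p1, d1) \<in> dtri C" "(cmp C g f, p2, d2) \<in> dtri C" "(g, p3, d3) \<in> dtri C"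
  shows "\<exists>a b. a \<in> Hom (tgt C p1) (tgt C p2) \<and> b \<in> Hom (tgt C p2) (tgt C p3) \<and>
     (a, b, cmp C (shM C p1) d3) \<in> dtri C \<and>
     cmp C a p1 = cmp C p2 g \<and> cmp C d2 a = d1 \<and> cmp C b p2 = p3 \<and> cmp C d3 b = cmp C (shM C f) d2"
proof -
  have "\<forall>f g p1 d1 p2 d2 p3 d3. f \<in> Mor C \<and> g \<in> Mor C \<and> tgt C f = src C g \<and>
      (f, p1, d1) \<in> dtri C \<and> (cmp C g f, p2, d2) \<in> dtri C \<and> (g, p3, d3) \<in> dtri C \<longrightarrow>
      (\<exists>a b. a \<in> Hom (tgt C p1) (tgt C p2) \<and> b \<in> Hom (tgt C p2) (tgt C p3) \<and>
         (a, b, cmp C (shM C p1) d3) \<in> dtri C \<and>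
         cmp C a p1 = cmp C p2 g \<and> cmp C d2 a = d1 \<and> cmp C b p2 = p3 \<and>
           cmp C d3 b = cmp C (shM C f) d2)"
    using triangulated unfolding triangulated_def by (elim conjE) assumption
  then show ?thesis using assms by blast
qed

lemma dtri_hom:
  assumes "(f, g, h) \<in> dtri C"
  shows "f \<in> Hom (src C f) (src C g)" "g \<in> Hom (src C g) (src C h)"
    "h \<in> Hom (src C h) (shO C (src C f))"
  using dtri_is_tri[OF assms] unfolding is_tri_def by (auto simp: hom_iff)

lemma dtri_ob:
  assumes "(f, g, h) \<in> dtri C"
  shows "src C f \<in> Ob C" "src C g \<in> Ob C" "src C h \<in> Ob C"
  using dtri_hom[OF assms] hom_ob by blast+

lemma dtri_tgt:
  assumes "(f, g, h) \<in> dtri C"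
  shows "tgt C f = src C g" "tgt C g = src C h" "tgt C h = shO C (src C f)"
  using dtri_hom[OF assms] by (auto simp: hom_iff)

lemma src_dtri_rotate:
  assumes "(f, g, h) \<in> dtri C"
  shows "src C (mneg C (shM C f)) = shO C (src C f)"
  using neg_hom[OF shift_hom[OF dtri_hom(1)[OF assms]]] by (simp add: hom_iff)

lemma dtri_cmp_zero:
  assumes d: "(f, g, h) \<in> dtri C"
  shows "cmp C g f = mzero C (src C f) (src C h)"
proof -
  let ?X = "src C f"
  have X: "?X \<in> Ob C" using dtri_ob[OF d] by blast
  obtain Z where Z: "zero_obj C Z" and t: "(idm C ?X, mzero C ?X Z, mzero C Z (shO C ?X)) \<in> dtri C"
    using dtri_id[OF X] by blast
  have ZO: "Z \<in> Ob C" using Z zero_obj_ob by blast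
  have idh: "idm C ?X \<in> Hom ?X ?X" using id_hom X by blast
  have s0: "src C (idm C ?X) = ?X" "src C (mzero C ?X Z) = ?X" "src C (mzero C Z (shO C ?X)) = Z"
    using idh zero_hom[OF X ZO] zero_hom[OF ZO shift_ob[OF X]] by (auto simp: hom_iff)
  obtain w
    where w: "tri_mor C (idm C ?X) (mzero C ?X Z) (mzero C Z (shO C ?X)) f g h (idm C ?X) f w"
    using dtri_complete_mor[OF t d] idh dtri_hom[OF d] s0 by metis
  then have "w \<in> Hom Z (src C h)" "cmp C w (mzero C ?X Z) = cmp C g f"
    unfolding tri_mor_def using s0 by auto
  then show ?thesis using cmp_zero_right X by metis
qed

lemma dtri_iso_zero:
  assumes f: "f \<in> Hom X Y" "iso_mor C f" and Z: "zero_obj C Z"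
    and t: "(idm C X, mzero C X Z, mzero C Z (shO C X)) \<in> dtri C"
  shows "(f, mzero C Y Z, mzero C Z (shO C X)) \<in> dtri C"
proof -
  have o: "X \<in> Ob C" "Y \<in> Ob C" "Z \<in> Ob C" "shO C X \<in> Ob C"
    using f hom_ob Z zero_obj_ob shift_ob by auto
  have fm: "f \<in> Mor C" "src C f = X" "tgt C f = Y" using f by (auto simp: hom_iff)
  have it: "is_tri C f (mzero C Y Z) (mzero C Z (shO C X))" unfolding is_tri_def
    using o fm by (simp add: mor_simps)
  have tm: "tri_mor C (idm C X) (mzero C X Z) (mzero C Z (shO C X))
      f (mzero C Y Z) (mzero C Z (shO C X)) (idm C X) f (idm C Z)"
    unfolding tri_mor_def using o fm shift_id by (simp add: mor_simps hom_iff)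
  show ?thesis using dtri_iso_closed[OF t it tm iso_mor_id[OF o(1)] f(2) iso_mor_id[OF o(3)]] .
qed

lemma shift_reflects_factorization:
  assumes f: "f \<in> Hom X Y" and a: "a \<in> Hom W Y" and w: "w \<in> Hom (shO C W) (shO C X)"
    and e: "shM C a = cmp C (shM C f) w"
  shows "\<exists>b\<in>Hom W X. cmp C f b = a"
proof -
  have ob: "W \<in> Ob C" "X \<in> Ob C" using a f hom_ob by auto
  obtain b where b: "b \<in> Hom W X" "shM C b = w" using shift_surj[OF ob w] by blast
  have "shM C (cmp C f b) = shM C a" using shift_cmp[OF b(1) f] b e by simp
  then have "cmp C f b = a" using shift_inj cmp_hom[OF b(1) f] a by blast
  then show ?thesis using b by blast
qed

text \<open>A morphism of triangles from the rotation of \<open>W \<rightarrow> W \<rightarrow> 0\<close> to the rotation of the given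
  triangle, with first components \<open>a\<close> and \<open>0\<close>, has a third component \<open>w\<close> with \<open>a[1] = f[1] \<circ> w\<close>;
  so \<open>w\<close> is the shift of the required lift.\<close>

lemma dtri_exact:
  assumes d: "(f, g, h) \<in> dtri C" and a: "a \<in> Hom W (src C g)"
    and ga: "cmp C g a = mzero C W (src C h)"
  shows "\<exists>b\<in>Hom W (src C f). cmp C f b = a"
proof -
  let ?X = "src C f" and ?Y = "src C g" and ?Zf = "src C h"
  have W: "W \<in> Ob C" using a hom_ob by blast
  have obs: "?X \<in> Ob C" "?Y \<in> Ob C" "?Zf \<in> Ob C" using dtri_ob[OF d] by auto
  obtain Z where Z: "zero_obj C Z" and t: "(idm C W, mzero C W Z, mzero C Z (shO C W)) \<in> dtri C"
    using dtri_id[OF W] by blast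
  have ZO: "Z \<in> Ob C" using Z zero_obj_ob by blast
  have s0: "src C (mzero C W Z) = W" "src C (mzero C Z (shO C W)) = Z"
    using zero_hom[OF W ZO] zero_hom[OF ZO shift_ob[OF W]] by (auto simp: hom_iff)
  have v: "mzero C Z ?Zf \<in> Hom Z ?Zf" using zero_hom ZO obs by blast
  have "cmp C (mzero C Z ?Zf) (mzero C W Z) = cmp C g a"
    using ga cmp_zero_right[OF v W] by simp
  then obtain w where w: "tri_mor C (mzero C W Z) (mzero C Z (shO C W)) (mneg C (shM C (idm C W)))
      g h (mneg C (shM C f)) a (mzero C Z ?Zf) w"
    using dtri_complete_mor[OF dtri_rotate[OF t] dtri_rotate[OF d]] a v s0 by metis
  have fsh: "shM C f \<in> Hom (shO C ?X) (shO C ?Y)" using shift_hom dtri_hom[OF d] by blast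
  have ah: "shM C a \<in> Hom (shO C W) (shO C ?Y)" using shift_hom a by blast
  have wh: "w \<in> Hom (shO C W) (shO C ?X)"
    and eq: "cmp C (shM C a) (mneg C (shM C (idm C W))) = cmp C (mneg C (shM C f)) w"
    using w neg_hom[OF shift_hom[OF id_hom[OF W]]] neg_hom[OF fsh] unfolding tri_mor_def
    by (auto simp: hom_iff)
  have "cmp C (shM C a) (mneg C (shM C (idm C W))) = mneg C (shM C a)"
    using cmp_neg_right[OF id_hom[OF shift_ob[OF W]] ah] shift_id[OF W] cmp_id_right[OF ah] by simp
  moreover have "cmp C (mneg C (shM C f)) w = mneg C (cmp C (shM C f) w)"
    using cmp_neg_left[OF wh fsh] .
  ultimately have "shM C a = cmp C (shM C f) w"
    using eq neg_neg ah cmp_hom[OF wh fsh] by metis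
  then show ?thesis using shift_reflects_factorization[OF dtri_hom(1)[OF d] a wh] by blast
qed

section \<open>Biproducts\<close>

definition biprod_maps :: "'o \<Rightarrow> 'o \<Rightarrow> 'o \<Rightarrow> 'm \<Rightarrow> 'm \<Rightarrow> 'm \<Rightarrow> 'm \<Rightarrow> bool" where
  "biprod_maps X Y S i1 i2 p1 p2 \<longleftrightarrow> X \<in> Ob C \<and> Y \<in> Ob C \<and> S \<in> Ob C \<and>
     i1 \<in> Hom X S \<and> i2 \<in> Hom Y S \<and> p1 \<in> Hom S X \<and> p2 \<in> Hom S Y \<and>
     cmp C p1 i1 = idm C X \<and> cmp C p2 i2 = idm C Y \<and>
     cmp C p2 i1 = mzero C X Y \<and> cmp C p1 i2 = mzero C Y X \<and>
     madd C (cmp C i1 p1) (cmp C i2 p2) = idm C S"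

lemma is_biprod_iff_maps: "is_biprod C X Y S \<longleftrightarrow> (\<exists>i1 i2 p1 p2. biprod_maps X Y S i1 i2 p1 p2)"
  unfolding is_biprod_def biprod_maps_def by blast

lemma biprod_mapsD:
  assumes "biprod_maps X Y S i1 i2 p1 p2"
  shows "X \<in> Ob C" "Y \<in> Ob C" "S \<in> Ob C"
   "i1 \<in> Mor C" "src C i1 = X" "tgt C i1 = S" "i2 \<in> Mor C" "src C i2 = Y" "tgt C i2 = S"
   "p1 \<in> Mor C" "src C p1 = S" "tgt C p1 = X" "p2 \<in> Mor C" "src C p2 = S" "tgt C p2 = Y"
   "cmp C p1 i1 = idm C X" "cmp C p2 i2 = idm C Y"
   "cmp C p2 i1 = mzero C X Y" "cmp C p1 i2 = mzero C Y X"
   "madd C (cmp C i1 p1) (cmp C i2 p2) = idm C S"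
  using assms unfolding biprod_maps_def by (auto simp: hom_iff)

lemma biprod_maps_cancel:
  assumes "biprod_maps X Y S i1 i2 p1 p2"
  shows "z \<in> Mor C \<Longrightarrow> tgt C z = X \<Longrightarrow> cmp C p1 (cmp C i1 z) = z"
    "z \<in> Mor C \<Longrightarrow> tgt C z = Y \<Longrightarrow> cmp C p2 (cmp C i2 z) = z"
    "z \<in> Mor C \<Longrightarrow> tgt C z = X \<Longrightarrow> cmp C p2 (cmp C i1 z) = mzero C (src C z) Y"
    "z \<in> Mor C \<Longrightarrow> tgt C z = Y \<Longrightarrow> cmp C p1 (cmp C i2 z) = mzero C (src C z) X"
  using biprod_mapsD[OF assms]
    cmp_eq_extend[of p1 i1 "idm C X" z] cmp_eq_extend[of p2 i2 "idm C Y" z]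
    cmp_eq_extend[of p2 i1 "mzero C X Y" z] cmp_eq_extend[of p1 i2 "mzero C Y X" z]
  by (simp_all add: mor_simps)

lemma biprod_mapsI:
  "X \<in> Ob C \<Longrightarrow> Y \<in> Ob C \<Longrightarrow> S \<in> Ob C \<Longrightarrow>
   i1 \<in> Mor C \<Longrightarrow> src C i1 = X \<Longrightarrow> tgt C i1 = S \<Longrightarrow>
   i2 \<in> Mor C \<Longrightarrow> src C i2 = Y \<Longrightarrow> tgt C i2 = S \<Longrightarrow>
   p1 \<in> Mor C \<Longrightarrow> src C p1 = S \<Longrightarrow> tgt C p1 = X \<Longrightarrow>
   p2 \<in> Mor C \<Longrightarrow> src C p2 = S \<Longrightarrow> tgt C p2 = Y \<Longrightarrow>
   cmp C p1 i1 = idm C X \<Longrightarrow> cmp C p2 i2 = idm C Y \<Longrightarrow>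
   cmp C p2 i1 = mzero C X Y \<Longrightarrow> cmp C p1 i2 = mzero C Y X \<Longrightarrow>
   madd C (cmp C i1 p1) (cmp C i2 p2) = idm C S \<Longrightarrow> biprod_maps X Y S i1 i2 p1 p2"
  unfolding biprod_maps_def by (auto simp: hom_iff)

lemma biprod_maps_swap: "biprod_maps X Y S i1 i2 p1 p2 \<Longrightarrow> biprod_maps Y X S i2 i1 p2 p1"
  unfolding biprod_maps_def using add_commute cmp_hom by metis

lemma biprod_maps_ext:
  assumes b: "biprod_maps X Y S i1 i2 p1 p2" and f: "f \<in> Hom S T" and g: "g \<in> Hom S T"
    and e1: "cmp C f i1 = cmp C g i1" and e2: "cmp C f i2 = cmp C g i2"
  shows "f = g"
proof -
  note d = biprod_mapsD[OF b]
  have fm: "f \<in> Mor C" "src C f = S" "tgt C f = T" "g \<in> Mor C" "src C g = S" "tgt C g = T"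
    using f g by (auto simp: hom_iff)
  have "f = cmp C f (madd C (cmp C i1 p1) (cmp C i2 p2))"
    using d(1-19) fm d(20) by (simp add: mor_simps)
  also have "\<dots> = madd C (cmp C (cmp C f i1) p1) (cmp C (cmp C f i2) p2)"
    using d(1-19) fm by (simp add: mor_simps)
  also have "\<dots> = madd C (cmp C (cmp C g i1) p1) (cmp C (cmp C g i2) p2)" using e1 e2 by simp
  also have "\<dots> = cmp C g (madd C (cmp C i1 p1) (cmp C i2 p2))"
    using d(1-19) fm by (simp add: mor_simps)
  also have "\<dots> = g" using d fm by (simp add: mor_simps)
  finally show ?thesis .
qed

lemma biprod_maps_zero:
  assumes Z: "zero_obj C Z" and X: "X \<in> Ob C"
  shows "biprod_maps X Z X (idm C X) (mzero C Z X) (idm C X) (mzero C X Z)"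
proof -
  have ZO: "Z \<in> Ob C" using Z zero_obj_ob by blast
  show ?thesis using ZO X zero_obj_id[OF Z] by (intro biprod_mapsI) (simp_all add: mor_simps)
qed

lemma dtri_zero_connecting_mono:
  assumes d: "(a, b, h) \<in> dtri C" and h0: "h = mzero C (src C h) (shO C (src C a))"
    and yh: "y \<in> Hom T (src C a)" and ay: "cmp C a y = mzero C T (src C b)"
  shows "y = mzero C T (src C a)"
proof -
  define X where "X = src C a"
  have ah: "a \<in> Hom X (src C b)" and bm: "b \<in> Mor C"
    using dtri_hom[OF d] unfolding X_def by (auto simp: hom_iff)
  have yX: "y \<in> Hom T X" using yh unfolding X_def .
  have ob: "T \<in> Ob C" "X \<in> Ob C" "src C b \<in> Ob C" using yX ah hom_ob by auto
  have d2: "(h, mneg C (shM C a), mneg C (shM C b)) \<in> dtri C"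
    using dtri_rotate[OF dtri_rotate[OF d]] .
  have "shM C y \<in> Hom (shO C T) (src C (mneg C (shM C a)))"
    using shift_hom[OF yh] src_dtri_rotate[OF d] by simp
  moreover have "cmp C (mneg C (shM C a)) (shM C y) = mneg C (shM C (cmp C a y))"
    using cmp_neg_left[OF shift_hom[OF yX] shift_hom[OF ah]] shift_cmp[OF yX ah] X_def by simp
  moreover have "\<dots> = mzero C (shO C T) (src C (mneg C (shM C b)))"
    using ay ob bm shift_zero neg_zero shift_ob by (simp add: src_neg src_shift shift_mor)
  ultimately obtain c where ch: "c \<in> Hom (shO C T) (src C h)" and hc: "cmp C h c = shM C y"
    using dtri_exact[OF d2] by metis
  have "cmp C h c = mzero C (shO C T) (shO C X)"
    using cmp_zero_left[OF ch shift_ob[OF ob(2)]] h0 X_def by simp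
  then have "shM C y = shM C (mzero C T X)" using hc shift_zero ob by simp
  then show ?thesis using shift_inj yh zero_hom ob unfolding X_def by blast
qed

lemma dtri_zero_connecting_section:
  assumes d: "(a, b, h) \<in> dtri C" and h0: "h = mzero C (src C h) (shO C (src C a))"
  obtains s where "s \<in> Hom (src C h) (src C b)" "cmp C b s = idm C (src C h)"
proof -
  have hh: "h \<in> Hom (src C h) (shO C (src C a))" and ob: "src C h \<in> Ob C"
    using dtri_hom[OF d] dtri_ob[OF d] by auto
  have "cmp C h (idm C (src C h)) = mzero C (src C h) (src C (mneg C (shM C a)))"
    using cmp_id_right[OF hh] h0 src_dtri_rotate[OF d] by simp
  then show ?thesis using that dtri_exact[OF dtri_rotate[OF d]] id_hom[OF ob] by blast
qed

text \<open>With a section \<open>s\<close> of \<open>b\<close>, the map \<open>1 - s \<circ> b\<close> is killed by \<open>b\<close>, hence factors as \<open>a \<circ> r\<close>;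
  since \<open>a\<close> is a monomorphism, \<open>r\<close> is the retraction completing the biproduct.\<close>

lemma dtri_zero_connecting_splits:
  assumes d: "(a, b, h) \<in> dtri C" and h0: "h = mzero C (src C h) (shO C (src C a))"
  shows "\<exists>s r. biprod_maps (src C a) (src C h) (src C b) a s r b"
proof -
  define X where "X = src C a"
  define Y where "Y = src C b"
  define Z where "Z = src C h"
  have ah: "a \<in> Hom X Y" and bh: "b \<in> Hom Y Z"
    using dtri_hom[OF d] unfolding X_def Y_def Z_def by auto
  have ob: "X \<in> Ob C" "Y \<in> Ob C" "Z \<in> Ob C" using ah bh hom_ob by auto
  have am: "a \<in> Mor C" "src C a = X" "tgt C a = Y" using ah by (auto simp: hom_iff)
  have bm: "b \<in> Mor C" "src C b = Y" "tgt C b = Z" using bh by (auto simp: hom_iff)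
  have ba: "cmp C b a = mzero C X Z" using dtri_cmp_zero[OF d] unfolding X_def Z_def .
  have mono: "y \<in> Hom T X \<Longrightarrow> cmp C a y = mzero C T Y \<Longrightarrow> y = mzero C T X" for y T
    using dtri_zero_connecting_mono[OF d h0] unfolding X_def Y_def by blast
  obtain s where sh: "s \<in> Hom Z Y" and bs: "cmp C b s = idm C Z"
    using dtri_zero_connecting_section[OF d h0] unfolding Z_def Y_def by blast
  have sm: "s \<in> Mor C" "src C s = Z" "tgt C s = Y" using sh by (auto simp: hom_iff)
  let ?x = "madd C (idm C Y) (mneg C (cmp C s b))"
  have bsz: "\<And>z. z \<in> Mor C \<Longrightarrow> tgt C z = Z \<Longrightarrow> cmp C b (cmp C s z) = z"
    using cmp_eq_extend[OF bs] sm bm by (simp add: mor_simps)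
  have "cmp C b ?x = mzero C Y Z"
    using am bm sm ob bsz by (simp add: mor_simps)
  then obtain r where rh: "r \<in> Hom Y X" and ar: "cmp C a r = ?x"
    using dtri_exact[OF d, of ?x Y] add_hom[OF id_hom[OF ob(2)] neg_hom[OF cmp_hom[OF bh sh]]]
    unfolding Y_def Z_def X_def by auto
  have rm: "r \<in> Mor C" "src C r = Y" "tgt C r = X" using rh by (auto simp: hom_iff)
  have arz: "\<And>z. z \<in> Mor C \<Longrightarrow> tgt C z = Y \<Longrightarrow> cmp C a (cmp C r z) = cmp C ?x z"
    using cmp_eq_extend[OF ar] rm am by (simp add: mor_simps)
  have baz: "\<And>z. z \<in> Mor C \<Longrightarrow> tgt C z = X \<Longrightarrow> cmp C b (cmp C a z) = mzero C (src C z) Z"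
    using cmp_eq_extend[OF ba] am bm ob by (simp add: mor_simps)
  have "cmp C a (madd C (cmp C r a) (mneg C (idm C X))) = mzero C X Y"
    using am bm sm rm ob arz baz ba by (simp add: mor_simps)
  then have "madd C (cmp C r a) (mneg C (idm C X)) = mzero C X X"
    using mono[OF add_hom[OF cmp_hom[OF ah rh] neg_hom[OF id_hom[OF ob(1)]]]] by blast
  then have ra: "cmp C r a = idm C X"
    using eq_if_add_neg_eq_zero[OF cmp_hom[OF ah rh] id_hom[OF ob(1)]] by blast
  have "cmp C a (cmp C r s) = mzero C Z Y"
    using am bm sm rm ob arz bsz bs by (simp add: mor_simps)
  then have rs: "cmp C r s = mzero C Z X" using mono[OF cmp_hom[OF sh rh]] by blast
  have "madd C (cmp C a r) (cmp C s b) = idm C Y"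
    using ar add_neg_add_cancel[OF id_hom[OF ob(2)] cmp_hom[OF bh sh]] by simp
  then have "biprod_maps X Z Y a s r b"
    using ob am bm sm rm ra bs ba rs by (intro biprod_mapsI) auto
  then show ?thesis unfolding X_def Z_def Y_def by blast
qed

lemma dtri_split_mono_zero_connecting:
  assumes d: "(i, g, h) \<in> dtri C" and p: "p \<in> Hom (src C g) (src C i)"
    and pi: "cmp C p i = idm C (src C i)"
  shows "h = mzero C (src C h) (shO C (src C i))"
proof -
  define X where "X = src C i"
  define S where "S = src C g"
  define Z where "Z = src C h"
  have ih: "i \<in> Hom X S" and hh: "h \<in> Hom Z (shO C X)" and ph: "p \<in> Hom S X"
    using dtri_hom[OF d] p unfolding X_def S_def Z_def by auto
  have ob: "X \<in> Ob C" "S \<in> Ob C" "Z \<in> Ob C" using ih hh hom_ob by auto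
  have "(h, mneg C (shM C i), mneg C (shM C g)) \<in> dtri C"
    using dtri_rotate[OF dtri_rotate[OF d]] .
  then have "cmp C (mneg C (shM C i)) h = mzero C Z (shO C S)"
    using dtri_cmp_zero src_dtri_rotate[OF dtri_rotate[OF d]] unfolding Z_def S_def by metis
  then have "mneg C (cmp C (shM C i) h) = mzero C Z (shO C S)"
    using cmp_neg_left[OF hh shift_hom[OF ih]] by simp
  then have ih0: "cmp C (shM C i) h = mzero C Z (shO C S)"
    using neg_neg[OF cmp_hom[OF hh shift_hom[OF ih]]] neg_zero[OF ob(3) shift_ob[OF ob(2)]] by metis
  have "h = cmp C (shM C (cmp C p i)) h" using pi hh shift_id ob cmp_id_left X_def by simp
  also have "\<dots> = cmp C (shM C p) (cmp C (shM C i) h)"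
    using shift_cmp[OF ih ph] cmp_assoc[OF hh shift_hom[OF ih] shift_hom[OF ph]] by simp
  also have "\<dots> = mzero C Z (shO C X)" using ih0 cmp_zero_right[OF shift_hom[OF ph] ob(3)] by simp
  finally show ?thesis unfolding Z_def X_def .
qed

lemma biprod_maps_same_inl:
  assumes b: "biprod_maps X Y S i1 i2 p1 p2" and b2: "biprod_maps X Z S i1 s r g"
  shows "cmp C (cmp C p2 s) g = p2" and "iso_mor C (cmp C p2 s)"
proof -
  note bd = biprod_mapsD[OF b] and bd2 = biprod_mapsD[OF b2]
  let ?w = "cmp C p2 s" and ?w' = "cmp C g i2"
  have wh: "?w \<in> Hom Z Y" and w'h: "?w' \<in> Hom Y Z" using bd bd2 by (auto simp: hom_iff mor_simps)
  have "p2 = cmp C p2 (madd C (cmp C i1 r) (cmp C s g))" using bd2(20) bd by (simp add: mor_simps)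
  also have "\<dots> = cmp C ?w g"
    using bd(1-19) bd2(1-19) biprod_maps_cancel[OF b] by (simp add: mor_simps)
  finally show wg: "cmp C ?w g = p2" by simp
  have ww': "cmp C ?w ?w' = idm C Y"
    using cmp_assoc[of i2 Y S g Z ?w Y] wg bd bd2 wh by (simp add: hom_iff)
  have "cmp C g (cmp C i2 p2) = g"
  proof -
    have giz: "\<And>z. z \<in> Mor C \<Longrightarrow> tgt C z = X \<Longrightarrow> cmp C g (cmp C i1 z) = mzero C (src C z) Z"
      using cmp_eq_extend[OF bd2(18)] bd bd2 by (simp add: mor_simps)
    have "g = cmp C g (madd C (cmp C i1 p1) (cmp C i2 p2))"
      using bd(20) bd bd2 by (simp add: mor_simps)
    also have "\<dots> = cmp C g (cmp C i2 p2)" using bd(1-19) bd2 giz by (simp add: mor_simps)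
    finally show ?thesis by simp
  qed
  moreover have "cmp C ?w' ?w = cmp C (cmp C g (cmp C i2 p2)) s"
    using bd bd2 by (simp add: mor_simps)
  ultimately have "cmp C ?w' ?w = idm C Z" using bd2 by simp
  then show "iso_mor C ?w" using iso_morI[OF wh w'h _ ww'] by blast
qed

text \<open>Complete \<open>i1\<close> to a distinguished triangle \<open>X \<rightarrow> S \<rightarrow> Z\<close>. Its connecting morphism vanishes
  because \<open>i1\<close> has a retraction, so it splits \<open>S\<close> as \<open>X \<oplus> Z\<close>; comparing this splitting with the
  given one yields an isomorphism of triangles.\<close>

lemma biprod_maps_dtri:
  assumes b: "biprod_maps X Y S i1 i2 p1 p2"
  shows "(i1, p2, mzero C Y (shO C X)) \<in> dtri C"
proof -
  note bd = biprod_mapsD[OF b]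
  obtain g h where d: "(i1, g, h) \<in> dtri C" using dtri_exists bd by blast
  define Z where "Z = src C h"
  have sg: "src C g = S" using dtri_tgt(1)[OF d] bd by simp
  have gm: "g \<in> Mor C" "src C g = S" "tgt C g = Z" and ob: "Z \<in> Ob C" "shO C X \<in> Ob C"
    using dtri_hom[OF d] dtri_ob[OF d] sg bd shift_ob unfolding Z_def by (auto simp: hom_iff)
  have h0: "h = mzero C Z (shO C X)"
    using dtri_split_mono_zero_connecting[OF d] bd sg unfolding Z_def by (simp add: hom_iff)
  obtain s r where b2: "biprod_maps X Z S i1 s r g"
    using dtri_zero_connecting_splits[OF d] h0 sg bd unfolding Z_def by auto
  have wh: "cmp C p2 s \<in> Hom Z Y" using bd biprod_mapsD[OF b2] by (auto simp: hom_iff mor_simps)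
  have "tri_mor C i1 g h i1 p2 (mzero C Y (shO C X)) (idm C X) (idm C S) (cmp C p2 s)"
    unfolding tri_mor_def using bd gm wh ob shift_id h0 biprod_maps_same_inl(1)[OF b b2]
    by (auto simp: hom_iff mor_simps)
  moreover have "is_tri C i1 p2 (mzero C Y (shO C X))"
    unfolding is_tri_def using bd ob by (simp add: mor_simps)
  ultimately show ?thesis
    using dtri_iso_closed[OF d] iso_mor_id bd(1,3) biprod_maps_same_inl(2)[OF b b2] by blast
qed

lemma biprod_maps_iso_left:
  assumes b: "biprod_maps X Y S i1 i2 p1 p2" and ph: "\<phi> \<in> Hom X' X" and ps: "\<psi> \<in> Hom X X'"
    and e1: "cmp C \<psi> \<phi> = idm C X'" and e2: "cmp C \<phi> \<psi> = idm C X"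
  shows "biprod_maps X' Y S (cmp C i1 \<phi>) i2 (cmp C \<psi> p1) p2"
proof -
  note d = biprod_mapsD[OF b]
  have m: "\<phi> \<in> Mor C" "src C \<phi> = X'" "tgt C \<phi> = X" "\<psi> \<in> Mor C" "src C \<psi> = X" "tgt C \<psi> = X'"
    using ph ps by (auto simp: hom_iff)
  have X': "X' \<in> Ob C" using ph hom_ob by blast
  have z: "\<And>z. z \<in> Mor C \<Longrightarrow> tgt C z = X \<Longrightarrow> cmp C \<phi> (cmp C \<psi> z) = z"
    using cmp_eq_extend[OF e2] m d by (simp add: mor_simps)
  have "madd C (cmp C (cmp C i1 \<phi>) (cmp C \<psi> p1)) (cmp C i2 p2) = madd C (cmp C i1 p1) (cmp C i2 p2)"
    using d(1-19) m z by (simp add: mor_simps)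
  then have s: "madd C (cmp C (cmp C i1 \<phi>) (cmp C \<psi> p1)) (cmp C i2 p2) = idm C S" using d by simp
  show ?thesis
    by (rule biprod_mapsI)
      (use d(1-19) m X' z s e1 biprod_maps_cancel[OF b] in \<open>simp_all add: mor_simps\<close>)
qed

lemma biprod_maps_isomorphic:
  assumes b: "biprod_maps X Y S i1 i2 p1 p2" and b': "biprod_maps X Y S' j1 j2 q1 q2"
  shows "isomorphic C S S'"
proof -
  note d = biprod_mapsD[OF b] and d' = biprod_mapsD[OF b']
  let ?f = "madd C (cmp C j1 p1) (cmp C j2 p2)" and ?g = "madd C (cmp C i1 q1) (cmp C i2 q2)"
  have fh: "?f \<in> Hom S S'" and gh: "?g \<in> Hom S' S"
    using d(1-19) d'(1-19) by (simp_all add: hom_iff mor_simps)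
  note e = d(1-19) d'(1-19) biprod_maps_cancel[OF b] biprod_maps_cancel[OF b']
  have "cmp C ?g ?f = idm C S"
    by (rule biprod_maps_ext[OF b cmp_hom[OF fh gh] id_hom[OF d(3)]])
      (use e in \<open>simp_all add: mor_simps\<close>)
  moreover have "cmp C ?f ?g = idm C S'"
    by (rule biprod_maps_ext[OF b' cmp_hom[OF gh fh] id_hom[OF d'(3)]])
      (use e in \<open>simp_all add: mor_simps\<close>)
  ultimately show ?thesis using isomorphicI[OF fh gh] by blast
qed

lemma biprod_maps_assoc:
  assumes b1: "biprod_maps X Y S1 a1 a2 q1 q2" and b2: "biprod_maps S1 W T b1 b2 r1 r2"
    and b3: "biprod_maps Y W S2 c1 c2 s1 s2"
  shows "biprod_maps X S2 T (cmp C b1 a1) (madd C (cmp C b1 (cmp C a2 s1)) (cmp C b2 s2))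
                (cmp C q1 r1) (madd C (cmp C c1 (cmp C q2 r1)) (cmp C c2 r2))"
proof -
  note d1 = biprod_mapsD[OF b1] and d2 = biprod_mapsD[OF b2] and d3 = biprod_mapsD[OF b3]
  note e = biprod_maps_cancel[OF b1] biprod_maps_cancel[OF b2] biprod_maps_cancel[OF b3]
  let ?I1 = "cmp C b1 a1" and ?I2 = "madd C (cmp C b1 (cmp C a2 s1)) (cmp C b2 s2)"
  let ?P1 = "cmp C q1 r1" and ?P2 = "madd C (cmp C c1 (cmp C q2 r1)) (cmp C c2 r2)"
  let ?L = "madd C (cmp C ?I1 ?P1) (cmp C ?I2 ?P2)"
  have Lh: "?L \<in> Hom T T" using d1(1-19) d2(1-19) d3(1-19) by (simp add: hom_iff mor_simps)
  have "cmp C ?L b1 = cmp C (idm C T) b1"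
    by (rule biprod_maps_ext[OF b1])
      (use d1(1-19) d2(1-19) d3(1-19) e in \<open>simp_all add: hom_iff mor_simps\<close>)
  moreover have "cmp C ?L b2 = cmp C (idm C T) b2"
    using d1(1-19) d2(1-19) d3(1-19) e d3(20) by (simp add: mor_simps)
  ultimately have L: "?L = idm C T"
    using biprod_maps_ext[OF b2 Lh id_hom[OF d2(3)]] by blast
  show ?thesis
    by (rule biprod_mapsI) (use d1(1-19) d2(1-19) d3(1-19) e L d3(20) in \<open>simp_all add: mor_simps\<close>)
qed

lemma biprod_maps_shift:
  assumes b: "biprod_maps X Y S i1 i2 p1 p2"
  shows "biprod_maps (shO C X) (shO C Y) (shO C S) (shM C i1) (shM C i2) (shM C p1) (shM C p2)"
proof -
  note d = biprod_mapsD[OF b]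
  have h: "i1 \<in> Hom X S" "i2 \<in> Hom Y S" "p1 \<in> Hom S X" "p2 \<in> Hom S Y"
    using d by (auto simp: hom_iff)
  have s: "shM C (madd C (cmp C i1 p1) (cmp C i2 p2)) =
    madd C (cmp C (shM C i1) (shM C p1)) (cmp C (shM C i2) (shM C p2))"
    using shift_add[OF cmp_hom[OF h(3) h(1)] cmp_hom[OF h(4) h(2)]] shift_cmp h by simp
  note sh = shift_hom[OF h(1)] shift_hom[OF h(2)] shift_hom[OF h(3)] shift_hom[OF h(4)]
    shift_cmp[OF h(1) h(3)] shift_cmp[OF h(2) h(4)] shift_cmp[OF h(1) h(4)] shift_cmp[OF h(2) h(3)]
  show ?thesis
    by (rule biprod_mapsI) (use d h sh shift_ob shift_id shift_zero s in \<open>simp_all add: hom_iff\<close>)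
qed

lemma biprod_ob: "is_biprod C X Y S \<Longrightarrow> X \<in> Ob C \<and> Y \<in> Ob C \<and> S \<in> Ob C"
  unfolding is_biprod_def by blast

lemma biprod_commute:
  assumes "is_biprod C X Y S"
  shows "is_biprod C Y X S"
proof -
  obtain i1 i2 p1 p2 where b1: "biprod_maps X Y S i1 i2 p1 p2"
    using assms(1) unfolding is_biprod_iff_maps by blast
  show ?thesis using biprod_maps_swap[OF b1] unfolding is_biprod_iff_maps by blast
qed

lemma biprod_exists: "X \<in> Ob C \<Longrightarrow> Y \<in> Ob C \<Longrightarrow> \<exists>S. is_biprod C X Y S"
  using triangulated unfolding triangulated_def additive_def by (elim conjE) blast

lemma biprod_isomorphic:
  assumes "is_biprod C X Y S" "is_biprod C X Y S'"
  shows "isomorphic C S S'"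
proof -
  obtain i1 i2 p1 p2 where b1: "biprod_maps X Y S i1 i2 p1 p2"
    using assms(1) unfolding is_biprod_iff_maps by blast
  obtain j1 j2 q1 q2 where b2: "biprod_maps X Y S' j1 j2 q1 q2"
    using assms(2) unfolding is_biprod_iff_maps by blast
  show ?thesis using biprod_maps_isomorphic[OF b1 b2] .
qed

lemma biprod_iso_left:
  assumes "is_biprod C X Y S" "isomorphic C X' X"
  shows "is_biprod C X' Y S"
proof -
  obtain i1 i2 p1 p2 where b: "biprod_maps X Y S i1 i2 p1 p2"
    using assms(1) unfolding is_biprod_iff_maps by blast
  obtain f g where "f \<in> Hom X' X" "g \<in> Hom X X'" "cmp C g f = idm C X'" "cmp C f g = idm C X"
    using assms isomorphicE by blast
  then have "biprod_maps X' Y S (cmp C i1 f) i2 (cmp C g p1) p2"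
    by (rule biprod_maps_iso_left[OF b])
  then show ?thesis unfolding is_biprod_iff_maps by blast
qed

lemma biprod_iso_right:
  assumes "is_biprod C X Y S" "isomorphic C Y' Y"
  shows "is_biprod C X Y' S"
  using biprod_iso_left[OF biprod_commute[OF assms(1)] assms(2)] biprod_commute by blast

lemma biprod_zero:
  assumes "zero_obj C Z" "X \<in> Ob C"
  shows "is_biprod C X Z X"
proof -
  have "biprod_maps X Z X (idm C X) (mzero C Z X) (idm C X) (mzero C X Z)"
    using biprod_maps_zero[OF assms] .
  then show ?thesis unfolding is_biprod_iff_maps by blast
qed

lemma biprod_shift:
  assumes "is_biprod C X Y S"
  shows "is_biprod C (shO C X) (shO C Y) (shO C S)"
proof -
  obtain i1 i2 p1 p2 where b: "biprod_maps X Y S i1 i2 p1 p2"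
    using assms(1) unfolding is_biprod_iff_maps by blast
  show ?thesis using biprod_maps_shift[OF b] unfolding is_biprod_iff_maps by blast
qed

lemma biprod_assoc:
  assumes "is_biprod C X Y S1" "is_biprod C S1 W T" "is_biprod C Y W S2"
  shows "is_biprod C X S2 T"
proof -
  obtain i1 i2 p1 p2 where b1: "biprod_maps X Y S1 i1 i2 p1 p2"
    using assms(1) unfolding is_biprod_iff_maps by blast
  obtain j1 j2 q1 q2 where b2: "biprod_maps S1 W T j1 j2 q1 q2"
    using assms(2) unfolding is_biprod_iff_maps by blast
  obtain k1 k2 r1 r2 where b3: "biprod_maps Y W S2 k1 k2 r1 r2"
    using assms(3) unfolding is_biprod_iff_maps by blast
  show ?thesis using biprod_maps_assoc[OF b1 b2 b3] unfolding is_biprod_iff_maps by blast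
qed

lemma biprod_cong:
  assumes "is_biprod C X Y S" "is_biprod C X' Y' S'" "isomorphic C X X'" "isomorphic C Y Y'"
  shows "isomorphic C S S'"
proof -
  have "is_biprod C X' Y' S"
    using biprod_iso_left[OF biprod_iso_right[OF assms(1) isomorphic_sym[OF assms(4)]]
      isomorphic_sym[OF assms(3)]] .
  then show ?thesis using biprod_isomorphic assms(2) by blast
qed

lemma biprod_dtri:
  assumes "is_biprod C X Y S"
  shows "\<exists>f g h. (f, g, h) \<in> dtri C \<and> src C f = X \<and> src C g = S \<and> src C h = Y"
proof -
  obtain i1 i2 p1 p2 where b: "biprod_maps X Y S i1 i2 p1 p2"
    using assms unfolding is_biprod_iff_maps by blast
  note d = biprod_mapsD[OF b]
  have "(i1, p2, mzero C Y (shO C X)) \<in> dtri C" using biprod_maps_dtri[OF b] .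
  moreover have "src C (mzero C Y (shO C X)) = Y" using d shift_ob by (simp add: mor_simps)
  ultimately show ?thesis using d by blast
qed

lemma dtri_zero_connecting_is_biprod:
  assumes d: "(a, b, mzero C W (shO C Z)) \<in> dtri C" and a: "src C a = Z" and W: "W \<in> Ob C"
  shows "is_biprod C Z W (src C b)"
proof -
  have Z: "Z \<in> Ob C" using dtri_ob[OF d] a by simp
  have "src C (mzero C W (shO C Z)) = W" using W Z shift_ob by (simp add: mor_simps)
  then show ?thesis
    using dtri_zero_connecting_splits[OF d] a unfolding is_biprod_iff_maps by auto
qed

text \<open>Apply the octahedral axiom to \<open>f\<close> followed by the split inclusion \<open>Y \<rightarrow> Y \<oplus> W\<close>:
  the cone of the composite is an extension of \<open>W\<close> by the cone \<open>Z\<close> of \<open>f\<close> whose connecting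
  morphism vanishes, hence it is \<open>Z \<oplus> W\<close>.\<close>

lemma dtri_add_summand:
  assumes d: "(f, p, e0) \<in> dtri C" and W: "W \<in> Ob C"
  shows "\<exists>f' q e. (f', q, e) \<in> dtri C \<and> src C f' = src C f \<and>
            is_biprod C (src C p) W (src C q) \<and> is_biprod C (src C e0) W (src C e)"
proof -
  define Y where "Y = src C p"
  define Z where "Z = src C e0"
  have fm: "f \<in> Mor C" "tgt C f = Y" and ph: "p \<in> Hom Y Z"
    using dtri_hom[OF d] unfolding Y_def Z_def by (auto simp: hom_iff)
  have ob: "Y \<in> Ob C" "Z \<in> Ob C" using ph hom_ob by auto
  obtain S where S: "is_biprod C Y W S" using biprod_exists ob W by blast
  then obtain i1 i2 p1 p2 where b: "biprod_maps Y W S i1 i2 p1 p2"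
    unfolding is_biprod_iff_maps by blast
  note bd = biprod_mapsD[OF b]
  have "cmp C i1 f \<in> Mor C" using fm bd by (simp add: mor_simps)
  then obtain q e where d2: "(cmp C i1 f, q, e) \<in> dtri C" using dtri_exists by blast
  obtain a b' where ab: "a \<in> Hom Z (tgt C q)" "b' \<in> Hom (tgt C q) W"
     "(a, b', cmp C (shM C p) (mzero C W (shO C Y))) \<in> dtri C"
    using dtri_octahedral[OF fm(1) bd(4) _ d d2 biprod_maps_dtri[OF b]] fm bd ph
    by (auto simp: hom_iff)
  then have "(a, b', mzero C W (shO C Z)) \<in> dtri C"
    using cmp_zero_right[OF shift_hom[OF ph] W] by simp
  then have "is_biprod C Z W (src C b')"
    by (rule dtri_zero_connecting_is_biprod) (use ab(1) W in \<open>auto simp: hom_iff\<close>)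
  then have "is_biprod C Z W (tgt C q)" using ab(2) by (simp add: hom_iff)
  moreover have "src C (cmp C i1 f) = src C f" "src C q = S" "tgt C q = src C e"
    using dtri_tgt[OF d2] fm bd by (simp_all add: mor_simps)
  ultimately show ?thesis using d2 S unfolding Y_def Z_def by auto
qed

definition bsum :: "'o \<Rightarrow> 'o \<Rightarrow> 'o" where
  "bsum X Y = (SOME S. is_biprod C X Y S)"

lemma bsum_biprod: "X \<in> Ob C \<Longrightarrow> Y \<in> Ob C \<Longrightarrow> is_biprod C X Y (bsum X Y)"
  unfolding bsum_def using biprod_exists by (metis someI_ex)

lemma bsum_ob: "X \<in> Ob C \<Longrightarrow> Y \<in> Ob C \<Longrightarrow> bsum X Y \<in> Ob C"
  using bsum_biprod biprod_ob by blast

lemma biprod_isomorphic_bsum: "is_biprod C X Y S \<Longrightarrow> isomorphic C S (bsum X Y)"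
  using bsum_biprod biprod_isomorphic biprod_ob by blast

lemma bsum_commute: "X \<in> Ob C \<Longrightarrow> Y \<in> Ob C \<Longrightarrow> isomorphic C (bsum X Y) (bsum Y X)"
  using bsum_biprod biprod_commute biprod_isomorphic_bsum by blast

lemma bsum_cong:
  assumes i1: "isomorphic C X X'" and i2: "isomorphic C Y Y'"
  shows "isomorphic C (bsum X Y) (bsum X' Y')"
proof -
  have o: "X \<in> Ob C" "X' \<in> Ob C" "Y \<in> Ob C" "Y' \<in> Ob C" using isomorphic_ob i1 i2 by auto
  show ?thesis using biprod_cong[OF bsum_biprod[OF o(1,3)] bsum_biprod[OF o(2,4)] i1 i2] .
qed

lemma bsum_assoc:
  assumes "X \<in> Ob C" "Y \<in> Ob C" "W \<in> Ob C"
  shows "isomorphic C (bsum (bsum X Y) W) (bsum X (bsum Y W))"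
proof -
  have "is_biprod C X (bsum Y W) (bsum (bsum X Y) W)"
    using biprod_assoc[OF bsum_biprod[OF assms(1,2)] bsum_biprod[OF bsum_ob[OF assms(1,2)] assms(3)]
        bsum_biprod[OF assms(2,3)]] .
  then show ?thesis using biprod_isomorphic_bsum by blast
qed

lemma bsum_zero_left: "zero_obj C Z \<Longrightarrow> X \<in> Ob C \<Longrightarrow> isomorphic C (bsum Z X) X"
  using biprod_isomorphic_bsum biprod_zero biprod_commute isomorphic_sym by blast

lemma bsum_interchange:
  assumes ob: "X \<in> Ob C" "Y \<in> Ob C" "U \<in> Ob C" "V \<in> Ob C"
  shows "isomorphic C (bsum (bsum X Y) (bsum U V)) (bsum (bsum X U) (bsum Y V))"
proof -
  note o = bsum_ob ob
  have 1: "isomorphic C (bsum (bsum X Y) (bsum U V)) (bsum X (bsum Y (bsum U V)))"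
    using bsum_assoc o by auto
  have 2: "isomorphic C (bsum Y (bsum U V)) (bsum (bsum Y U) V)"
    using bsum_assoc o isomorphic_sym by auto
  have 3: "isomorphic C (bsum (bsum Y U) V) (bsum (bsum U Y) V)"
    using bsum_cong bsum_commute isomorphic_refl o by auto
  have 4: "isomorphic C (bsum (bsum U Y) V) (bsum U (bsum Y V))"
    using bsum_assoc o by auto
  have 5: "isomorphic C (bsum X (bsum U (bsum Y V))) (bsum (bsum X U) (bsum Y V))"
    using bsum_assoc o isomorphic_sym by auto
  have "isomorphic C (bsum Y (bsum U V)) (bsum U (bsum Y V))"
    using 2 3 4 isomorphic_trans by blast
  then have "isomorphic C (bsum X (bsum Y (bsum U V))) (bsum X (bsum U (bsum Y V)))"
    using bsum_cong isomorphic_refl ob by blast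
  then show ?thesis using 1 5 isomorphic_trans by blast
qed

section \<open>Triangulated subcategories\<close>

lemma tri_subD:
  assumes "tri_sub C D"
  shows "D \<subseteq> Ob C" "\<exists>Z\<in>D. zero_obj C Z" "\<And>X Y. X \<in> D \<Longrightarrow> isomorphic C X Y \<Longrightarrow> Y \<in> D"
    "\<And>X. X \<in> Ob C \<Longrightarrow> X \<in> D \<longleftrightarrow> shO C X \<in> D"
    "\<And>f g h. (f, g, h) \<in> dtri C \<Longrightarrow> src C f \<in> D \<Longrightarrow> src C g \<in> D \<Longrightarrow> src C h \<in> D"
  using assms unfolding tri_sub_def using isomorphic_ob by blast+

lemma tri_sub_extension:
  assumes D: "tri_sub C D" and d: "(f, g, h) \<in> dtri C" and "src C f \<in> D" "src C h \<in> D"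
  shows "src C g \<in> D"
proof -
  have d2: "(h, mneg C (shM C f), mneg C (shM C g)) \<in> dtri C"
    using dtri_rotate[OF dtri_rotate[OF d]] .
  have "src C (mneg C (shM C f)) = shO C (src C f)" using src_dtri_rotate[OF d] .
  moreover have "src C (mneg C (shM C g)) = shO C (src C g)"
    using src_dtri_rotate[OF dtri_rotate[OF d]] .
  moreover have "shO C (src C f) \<in> D" using tri_subD(4)[OF D] dtri_ob[OF d] assms by blast
  ultimately have "shO C (src C g) \<in> D" using tri_subD(5)[OF D d2] assms by simp
  then show ?thesis using tri_subD(4)[OF D] dtri_ob[OF d] by blast
qed

lemma tri_sub_biprod:
  assumes D: "tri_sub C D" and b: "is_biprod C X Y S" and "X \<in> D" "Y \<in> D"
  shows "S \<in> D"
  using biprod_dtri[OF b] tri_sub_extension[OF D] assms by metis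

lemma tri_sub_biprod_cancel:
  assumes D: "tri_sub C D" and b: "is_biprod C X Y S" and "S \<in> D" "Y \<in> D"
  shows "X \<in> D"
  using biprod_dtri[OF biprod_commute[OF b]] tri_subD(5)[OF D] assms by metis

end

section \<open>Rational combinations of objects\<close>

lemma sum_fun_apply: "(sum f A) x = sum (\<lambda>a. f a x) A"
  by (induct A rule: infinite_finite_induct) auto

interpretation qfun: module "(\<lambda>(c::rat) (v::'a \<Rightarrow> rat) x. c * v x)"
  by standard (auto simp: fun_eq_iff algebra_simps)

lemma qspan_eq_span: "qspan S = qfun.span S"
  unfolding qspan_def qfun.span_explicit
  by (auto simp: sum_fun_apply fun_eq_iff)

lemma gimgQ_eq_span: "gimgQ C D = qfun.span (delta ` D \<union> tri_rels C)"
  unfolding gimgQ_def qspan_eq_span ..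

lemma qfun_span_two_of_three:
  assumes r: "(\<lambda>x. u x - v x + w x) \<in> qfun.span S"
  shows "u \<in> qfun.span S \<Longrightarrow> v \<in> qfun.span S \<Longrightarrow> w \<in> qfun.span S"
    and "u \<in> qfun.span S \<Longrightarrow> w \<in> qfun.span S \<Longrightarrow> v \<in> qfun.span S"
    and "v \<in> qfun.span S \<Longrightarrow> w \<in> qfun.span S \<Longrightarrow> u \<in> qfun.span S"
proof -
  let ?r = "\<lambda>x. u x - v x + w x"
  have w: "w = (?r - u) + v" and v: "v = (u + w) - ?r" and u: "u = (?r + v) - w"
    by (auto simp: fun_eq_iff)
  show "u \<in> qfun.span S \<Longrightarrow> v \<in> qfun.span S \<Longrightarrow> w \<in> qfun.span S"
    by (subst w) (simp add: r qfun.span_add qfun.span_diff)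
  show "u \<in> qfun.span S \<Longrightarrow> w \<in> qfun.span S \<Longrightarrow> v \<in> qfun.span S"
    by (subst v) (simp add: r qfun.span_add qfun.span_diff)
  show "v \<in> qfun.span S \<Longrightarrow> w \<in> qfun.span S \<Longrightarrow> u \<in> qfun.span S"
    by (subst u) (simp add: r qfun.span_add qfun.span_diff)
qed

lemma quotient_of_clear_denominator:
  assumes c: "quotient_of c = (a, b)" and y: "of_int N * y = (of_int u :: rat)"
  shows "of_int (b * N) * (c * of_int w + y) = of_int (N * a * w + b * u)"
proof -
  have "b > 0" "c = of_int a / of_int b" using c quotient_of_denom_pos quotient_of_div by blast+
  then have "of_int (b * N) * (c * of_int w + y) =
      of_int N * of_int a * of_int w + of_int b * (of_int N * y)"
    by (simp add: field_simps)
  then show ?thesis using y by simp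
qed

definition idelta :: "'a \<Rightarrow> 'a \<Rightarrow> int" where
  "idelta X = (\<lambda>Y. if Y = X then 1 else 0)"

lemma of_int_idelta: "(\<lambda>x. of_int (idelta X x)) = delta X"
  unfolding idelta_def delta_def by auto

lemma (in comm_group) finprod_int_pow:
  assumes "finite A" "f \<in> A \<rightarrow> carrier G"
  shows "finprod G (\<lambda>x. f x [^] (k::int)) A = finprod G f A [^] k"
  using assms
proof (induct A rule: finite_induct)
  case empty
  then show ?case by simp
next
  case (insert a A)
  then have fa: "f a \<in> carrier G" and fA: "f \<in> A \<rightarrow> carrier G" by auto
  have "finprod G (\<lambda>x. f x [^] k) (insert a A) = f a [^] k \<otimes> finprod G (\<lambda>x. f x [^] k) A"
    using insert fa fA by (intro finprod_insert) auto
  also have "\<dots> = f a [^] k \<otimes> finprod G f A [^] k"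
    using insert by simp
  also have "\<dots> = (f a \<otimes> finprod G f A) [^] k"
    using int_pow_distrib fa fA by (simp add: finprod_closed)
  also have "\<dots> = finprod G f (insert a A) [^] k"
    using insert fa fA by (simp add: finprod_insert)
  finally show ?case .
qed

section \<open>Classes of objects modulo a dense subcategory\<close>

locale dense_subcategory = triangulated_category C for C :: "('o, 'm) tricat" +
  fixes B :: "'o set"
  assumes dense: "dense_sub C B"
begin

lemma B_tri_sub: "tri_sub C B"
  using dense unfolding dense_sub_def by blast

lemma B_Ob: "B \<subseteq> Ob C"
  using tri_subD(1)[OF B_tri_sub] .

lemma B_dense: "U \<in> Ob C \<Longrightarrow> \<exists>V\<in>Ob C. \<exists>S\<in>B. is_biprod C U V S"
  using dense unfolding dense_sub_def by blast

lemma B_isomorphic: "X \<in> B \<Longrightarrow> isomorphic C X Y \<Longrightarrow> Y \<in> B"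
  using tri_subD(3)[OF B_tri_sub] by blast

definition Z0 :: 'o where
  "Z0 = (SOME Z. Z \<in> B \<and> zero_obj C Z)"

lemma Z0: "Z0 \<in> B" "zero_obj C Z0" "Z0 \<in> Ob C"
proof -
  have "\<exists>Z. Z \<in> B \<and> zero_obj C Z" using tri_subD(2)[OF B_tri_sub] by blast
  then have "Z0 \<in> B \<and> zero_obj C Z0" unfolding Z0_def by (rule someI_ex)
  then show "Z0 \<in> B" "zero_obj C Z0" "Z0 \<in> Ob C" using B_Ob by auto
qed

lemma B_bsum: "X \<in> B \<Longrightarrow> Y \<in> B \<Longrightarrow> bsum X Y \<in> B"
  using tri_sub_biprod[OF B_tri_sub] bsum_biprod B_Ob by blast

lemma B_bsum_cancel: "X \<in> Ob C \<Longrightarrow> Y \<in> B \<Longrightarrow> bsum X Y \<in> B \<Longrightarrow> X \<in> B"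
  using tri_sub_biprod_cancel[OF B_tri_sub] bsum_biprod B_Ob by blast

definition stably_iso :: "'o \<Rightarrow> 'o \<Rightarrow> bool" where
  "stably_iso X Y \<longleftrightarrow> X \<in> Ob C \<and> Y \<in> Ob C \<and>
   (\<exists>P\<in>B. \<exists>Q\<in>B. isomorphic C (bsum X P) (bsum Y Q))"

lemma stably_iso_refl: "X \<in> Ob C \<Longrightarrow> stably_iso X X"
  unfolding stably_iso_def using Z0 isomorphic_refl bsum_ob by blast

lemma stably_iso_sym: "stably_iso X Y \<Longrightarrow> stably_iso Y X"
  unfolding stably_iso_def using isomorphic_sym by blast

lemma isomorphic_imp_stably_iso: "isomorphic C X Y \<Longrightarrow> stably_iso X Y"
  unfolding stably_iso_def using Z0 bsum_cong isomorphic_refl isomorphic_ob by blast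

lemma stably_iso_trans:
  assumes r1: "stably_iso X Y" and r2: "stably_iso Y Z"
  shows "stably_iso X Z"
proof -
  obtain P Q where PQ: "P \<in> B" "Q \<in> B" and i1: "isomorphic C (bsum X P) (bsum Y Q)"
    and ob1: "X \<in> Ob C" "Y \<in> Ob C"
    using r1 unfolding stably_iso_def by blast
  obtain P' Q' where PQ': "P' \<in> B" "Q' \<in> B" and i2: "isomorphic C (bsum Y P') (bsum Z Q')"
    and ob2: "Z \<in> Ob C"
    using r2 unfolding stably_iso_def by blast
  have ob: "P \<in> Ob C" "Q \<in> Ob C" "P' \<in> Ob C" "Q' \<in> Ob C" using PQ PQ' B_Ob by auto
  note o = ob ob1 ob2 bsum_ob
  have a: "isomorphic C (bsum X (bsum P P')) (bsum (bsum X P) P')"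
    using bsum_assoc o isomorphic_sym by auto
  have b: "isomorphic C (bsum (bsum X P) P') (bsum (bsum Y Q) P')"
    using bsum_cong i1 isomorphic_refl o by auto
  have c: "isomorphic C (bsum (bsum Y Q) P') (bsum Y (bsum Q P'))" using bsum_assoc o by auto
  have d: "isomorphic C (bsum Y (bsum Q P')) (bsum Y (bsum P' Q))"
    using bsum_cong bsum_commute isomorphic_refl o by auto
  have e: "isomorphic C (bsum Y (bsum P' Q)) (bsum (bsum Y P') Q)"
    using bsum_assoc o isomorphic_sym by auto
  have f: "isomorphic C (bsum (bsum Y P') Q) (bsum (bsum Z Q') Q)"
    using bsum_cong i2 isomorphic_refl o by auto
  have g: "isomorphic C (bsum (bsum Z Q') Q) (bsum Z (bsum Q' Q))" using bsum_assoc o by auto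
  have "isomorphic C (bsum X (bsum P P')) (bsum Z (bsum Q' Q))"
    using a b c d e f g isomorphic_trans by meson
  moreover have "bsum P P' \<in> B" "bsum Q' Q \<in> B" using B_bsum PQ PQ' by auto
  ultimately show ?thesis unfolding stably_iso_def using ob1 ob2 by blast
qed

lemma stably_iso_bsum:
  assumes r1: "stably_iso X X'" and r2: "stably_iso Y Y'"
  shows "stably_iso (bsum X Y) (bsum X' Y')"
proof -
  obtain P Q where PQ: "P \<in> B" "Q \<in> B" and i1: "isomorphic C (bsum X P) (bsum X' Q)"
    and ob1: "X \<in> Ob C" "X' \<in> Ob C"
    using r1 unfolding stably_iso_def by blast
  obtain P' Q' where PQ': "P' \<in> B" "Q' \<in> B" and i2: "isomorphic C (bsum Y P') (bsum Y' Q')"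
    and ob2: "Y \<in> Ob C" "Y' \<in> Ob C"
    using r2 unfolding stably_iso_def by blast
  have ob: "P \<in> Ob C" "Q \<in> Ob C" "P' \<in> Ob C" "Q' \<in> Ob C" using PQ PQ' B_Ob by auto
  note o = ob ob1 ob2 bsum_ob
  have a: "isomorphic C (bsum (bsum X Y) (bsum P P')) (bsum (bsum X P) (bsum Y P'))"
    using bsum_interchange o by auto
  have b: "isomorphic C (bsum (bsum X P) (bsum Y P')) (bsum (bsum X' Q) (bsum Y' Q'))"
    using bsum_cong i1 i2 by auto
  have c: "isomorphic C (bsum (bsum X' Q) (bsum Y' Q')) (bsum (bsum X' Y') (bsum Q Q'))"
    using bsum_interchange o by auto
  have "isomorphic C (bsum (bsum X Y) (bsum P P')) (bsum (bsum X' Y') (bsum Q Q'))"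
    using a b c isomorphic_trans by meson
  moreover have "bsum P P' \<in> B" "bsum Q Q' \<in> B" using B_bsum PQ PQ' by auto
  ultimately show ?thesis unfolding stably_iso_def using o by blast
qed

lemma stably_iso_Z0_iff: "X \<in> Ob C \<Longrightarrow> stably_iso X Z0 \<longleftrightarrow> X \<in> B"
proof
  assume X: "X \<in> Ob C" and r: "stably_iso X Z0"
  then obtain P Q where PQ: "P \<in> B" "Q \<in> B" and i: "isomorphic C (bsum X P) (bsum Z0 Q)"
    unfolding stably_iso_def by blast
  have "isomorphic C (bsum Z0 Q) Q" using bsum_zero_left Z0(2) PQ B_Ob by blast
  then have "bsum X P \<in> B" using i isomorphic_trans isomorphic_sym B_isomorphic PQ by metis
  then show "X \<in> B" using B_bsum_cancel X PQ by blast
next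
  assume X: "X \<in> Ob C" and XB: "X \<in> B"
  have "isomorphic C (bsum X Z0) (bsum Z0 X)" using bsum_commute X Z0 by blast
  then show "stably_iso X Z0" unfolding stably_iso_def using X Z0 XB by blast
qed

lemma stably_iso_shiftD:
  assumes X: "X \<in> Ob C" and Y: "Y \<in> Ob C" and r: "stably_iso (shO C X) (shO C Y)"
  shows "stably_iso X Y"
proof -
  obtain P Q where PQ: "P \<in> B" "Q \<in> B" and i: "isomorphic C (bsum (shO C X) P) (bsum (shO C Y) Q)"
    using r unfolding stably_iso_def by blast
  have PQo: "P \<in> Ob C" "Q \<in> Ob C" using PQ B_Ob by auto
  obtain P0 where P0: "P0 \<in> Ob C" "isomorphic C (shO C P0) P" using shift_ess_surj PQo by blast
  obtain Q0 where Q0: "Q0 \<in> Ob C" "isomorphic C (shO C Q0) Q" using shift_ess_surj PQo by blast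
  have P0B: "P0 \<in> B"
    using B_isomorphic[OF PQ(1) isomorphic_sym[OF P0(2)]] tri_subD(4)[OF B_tri_sub P0(1)] by blast
  have Q0B: "Q0 \<in> B"
    using B_isomorphic[OF PQ(2) isomorphic_sym[OF Q0(2)]] tri_subD(4)[OF B_tri_sub Q0(1)] by blast
  have b1: "is_biprod C (shO C X) P (shO C (bsum X P0))"
    using biprod_iso_right[OF biprod_shift[OF bsum_biprod[OF X P0(1)]] isomorphic_sym[OF P0(2)]] .
  have b2: "is_biprod C (shO C Y) Q (shO C (bsum Y Q0))"
    using biprod_iso_right[OF biprod_shift[OF bsum_biprod[OF Y Q0(1)]] isomorphic_sym[OF Q0(2)]] .
  have "isomorphic C (shO C (bsum X P0)) (shO C (bsum Y Q0))"
    using biprod_isomorphic_bsum[OF b1] biprod_isomorphic_bsum[OF b2] i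
      isomorphic_trans isomorphic_sym by meson
  then have "isomorphic C (bsum X P0) (bsum Y Q0)"
    using isomorphic_shiftD bsum_ob X Y P0 Q0 by blast
  then show ?thesis unfolding stably_iso_def using X Y P0B Q0B by blast
qed

definition cls :: "'o \<Rightarrow> 'o set" where
  "cls X = {Y \<in> Ob C. stably_iso X Y}"

lemma cls_eq_iff: "X \<in> Ob C \<Longrightarrow> Y \<in> Ob C \<Longrightarrow> cls X = cls Y \<longleftrightarrow> stably_iso X Y"
proof
  assume "X \<in> Ob C" "Y \<in> Ob C" "cls X = cls Y"
  then have "Y \<in> cls X" unfolding cls_def using stably_iso_refl by blast
  then show "stably_iso X Y" unfolding cls_def by blast
next
  assume "X \<in> Ob C" "Y \<in> Ob C" "stably_iso X Y"
  then show "cls X = cls Y" unfolding cls_def using stably_iso_sym stably_iso_trans by blast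
qed

lemma cls_isomorphic: "isomorphic C X Y \<Longrightarrow> cls X = cls Y"
  using cls_eq_iff isomorphic_imp_stably_iso isomorphic_ob by metis

definition rep :: "'o set \<Rightarrow> 'o" where
  "rep a = (SOME X. X \<in> Ob C \<and> a = cls X)"

lemma rep_cls: "X \<in> Ob C \<Longrightarrow> rep (cls X) \<in> Ob C \<and> stably_iso (rep (cls X)) X"
proof -
  assume X: "X \<in> Ob C"
  have "\<exists>Y. Y \<in> Ob C \<and> cls X = cls Y" using X by blast
  then have "rep (cls X) \<in> Ob C \<and> cls X = cls (rep (cls X))" unfolding rep_def by (rule someI_ex)
  then show ?thesis using cls_eq_iff X by metis
qed

definition G :: "'o set monoid" where
  "G = \<lparr>carrier = cls ` Ob C, mult = (\<lambda>a b. cls (bsum (rep a) (rep b))), one = cls Z0\<rparr>"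

lemma G_carrier: "carrier G = cls ` Ob C"
  unfolding G_def by simp

lemma G_carrierE:
  assumes "x \<in> carrier G"
  obtains X where "X \<in> Ob C" "x = cls X"
  using assms G_carrier by auto

lemma G_one: "one G = cls Z0"
  unfolding G_def by simp

lemma G_mult: "X \<in> Ob C \<Longrightarrow> Y \<in> Ob C \<Longrightarrow> mult G (cls X) (cls Y) = cls (bsum X Y)"
  unfolding G_def using cls_eq_iff stably_iso_bsum rep_cls bsum_ob by simp

lemma cls_eq_one_iff: "X \<in> Ob C \<Longrightarrow> cls X = one G \<longleftrightarrow> X \<in> B"
  using G_one cls_eq_iff stably_iso_Z0_iff Z0 by metis

lemma comm_group_G: "comm_group G"
proof (rule comm_groupI)
  fix x y z
  assume "x \<in> carrier G" "y \<in> carrier G" "z \<in> carrier G"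
  then obtain X Y Z where ob: "X \<in> Ob C" "Y \<in> Ob C" "Z \<in> Ob C"
    and "x = cls X" "y = cls Y" "z = cls Z"
    by (metis G_carrierE)
  then show "x \<otimes>\<^bsub>G\<^esub> y \<otimes>\<^bsub>G\<^esub> z = x \<otimes>\<^bsub>G\<^esub> (y \<otimes>\<^bsub>G\<^esub> z)"
    using cls_isomorphic[OF bsum_assoc[OF ob]] by (simp add: G_mult bsum_ob)
next
  fix x y
  assume "x \<in> carrier G" "y \<in> carrier G"
  then obtain X Y where ob: "X \<in> Ob C" "Y \<in> Ob C" and "x = cls X" "y = cls Y"
    by (metis G_carrierE)
  then show "x \<otimes>\<^bsub>G\<^esub> y \<in> carrier G" "x \<otimes>\<^bsub>G\<^esub> y = y \<otimes>\<^bsub>G\<^esub> x"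
    using cls_isomorphic[OF bsum_commute[OF ob]] by (simp_all add: G_mult G_carrier bsum_ob)
next
  fix x
  assume "x \<in> carrier G"
  then obtain X where X: "X \<in> Ob C" and x: "x = cls X" by (metis G_carrierE)
  then show "\<one>\<^bsub>G\<^esub> \<otimes>\<^bsub>G\<^esub> x = x"
    using cls_isomorphic[OF bsum_zero_left[OF Z0(2) X]] by (simp add: G_one G_mult Z0)
  obtain V S where V: "V \<in> Ob C" "S \<in> B" "is_biprod C X V S" using B_dense X by blast
  then have "bsum V X \<in> B" using B_isomorphic biprod_isomorphic_bsum biprod_commute by blast
  then show "\<exists>y\<in>carrier G. y \<otimes>\<^bsub>G\<^esub> x = \<one>\<^bsub>G\<^esub>"
    using cls_eq_one_iff G_mult G_carrier x X V bsum_ob by auto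
qed (simp add: G_carrier G_one Z0)

end

sublocale dense_subcategory \<subseteq> G: comm_group G
  by (rule comm_group_G)

context dense_subcategory
begin

lemma cls_carrier: "X \<in> Ob C \<Longrightarrow> cls X \<in> carrier G"
  by (simp add: G_carrier)

lemma cls_biprod: "is_biprod C X Y S \<Longrightarrow> cls S = cls X \<otimes>\<^bsub>G\<^esub> cls Y"
  using cls_isomorphic biprod_isomorphic_bsum G_mult biprod_ob by metis

text \<open>Rotate \<open>X \<rightarrow> Y \<rightarrow> E\<close> twice to \<open>E \<rightarrow> X[1] \<rightarrow> Y[1]\<close> and add a summand \<open>W\<close> with
  \<open>Y[1] \<oplus> W \<in> B\<close>; since \<open>E \<in> B\<close>, also \<open>X[1] \<oplus> W \<in> B\<close>, so \<open>X[1]\<close> and \<open>Y[1]\<close> have the same class.\<close>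

lemma cls_eq_if_third_in_B:
  assumes d: "(f, g, h) \<in> dtri C" and E: "src C h \<in> B"
  shows "cls (src C f) = cls (src C g)"
proof -
  define X where "X = src C f"
  define Y where "Y = src C g"
  have ob: "X \<in> Ob C" "Y \<in> Ob C" using dtri_ob[OF d] unfolding X_def Y_def by auto
  have d2: "(h, mneg C (shM C f), mneg C (shM C g)) \<in> dtri C"
    using dtri_rotate[OF dtri_rotate[OF d]] .
  have s2: "src C (mneg C (shM C f)) = shO C X" "src C (mneg C (shM C g)) = shO C Y"
    using src_dtri_rotate[OF d] src_dtri_rotate[OF dtri_rotate[OF d]] unfolding X_def Y_def by auto
  have sob: "shO C X \<in> Ob C" "shO C Y \<in> Ob C" using shift_ob ob by auto
  obtain W D where WD: "W \<in> Ob C" "D \<in> B" "is_biprod C (shO C Y) W D" using B_dense sob by blast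
  obtain f' q e where t: "(f', q, e) \<in> dtri C" "src C f' = src C h"
    "is_biprod C (shO C X) W (src C q)" "is_biprod C (shO C Y) W (src C e)"
    using dtri_add_summand[OF d2 WD(1)] s2 by auto
  have eB: "src C e \<in> B" using B_isomorphic[OF WD(2)] biprod_isomorphic[OF WD(3) t(4)] by blast
  have qB: "src C q \<in> B" using tri_sub_extension[OF B_tri_sub t(1)] t(2) E eB by simp
  have c1: "cls (shO C X) \<otimes>\<^bsub>G\<^esub> cls W = \<one>\<^bsub>G\<^esub>"
    using cls_biprod[OF t(3)] cls_eq_one_iff qB B_Ob by auto
  have c2: "cls (shO C Y) \<otimes>\<^bsub>G\<^esub> cls W = \<one>\<^bsub>G\<^esub>"
    using cls_biprod[OF t(4)] cls_eq_one_iff eB B_Ob by auto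
  have "cls (shO C X) = cls (shO C Y)" using G.right_cancel c1 c2 cls_carrier sob WD(1) by metis
  then have "stably_iso (shO C X) (shO C Y)" using cls_eq_iff sob by blast
  then have "stably_iso X Y" using stably_iso_shiftD ob by blast
  then show ?thesis using cls_eq_iff ob unfolding X_def Y_def by blast
qed

text \<open>Add a summand \<open>W\<close> with \<open>Z \<oplus> W \<in> B\<close> to \<open>Y\<close> and \<open>Z\<close>: then \<open>[X] = [Y \<oplus> W] = [Y][W]\<close>
  and \<open>[Z][W] = 1\<close>.\<close>

lemma cls_dtri:
  assumes d: "(f, g, h) \<in> dtri C"
  shows "cls (src C g) = cls (src C f) \<otimes>\<^bsub>G\<^esub> cls (src C h)"
proof -
  have ob: "src C f \<in> Ob C" "src C g \<in> Ob C" "src C h \<in> Ob C" using dtri_ob[OF d] by auto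
  obtain W D where WD: "W \<in> Ob C" "D \<in> B" "is_biprod C (src C h) W D" using B_dense ob by blast
  obtain f' q e where t: "(f', q, e) \<in> dtri C" "src C f' = src C f"
    "is_biprod C (src C g) W (src C q)" "is_biprod C (src C h) W (src C e)"
    using dtri_add_summand[OF d WD(1)] by blast
  have eB: "src C e \<in> B" using B_isomorphic[OF WD(2)] biprod_isomorphic[OF WD(3) t(4)] by blast
  have e1: "cls (src C f) = cls (src C g) \<otimes>\<^bsub>G\<^esub> cls W"
    using cls_eq_if_third_in_B[OF t(1) eB] t(2) cls_biprod[OF t(3)] by simp
  have e2: "cls (src C h) \<otimes>\<^bsub>G\<^esub> cls W = \<one>\<^bsub>G\<^esub>"
    using cls_biprod[OF t(4)] cls_eq_one_iff eB B_Ob by auto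
  have car: "cls (src C f) \<in> carrier G" "cls (src C g) \<in> carrier G"
    "cls (src C h) \<in> carrier G" "cls W \<in> carrier G"
    using cls_carrier ob WD by auto
  have "(cls (src C f) \<otimes>\<^bsub>G\<^esub> cls (src C h)) \<otimes>\<^bsub>G\<^esub> cls W = cls (src C g) \<otimes>\<^bsub>G\<^esub> cls W"
    using e1 e2 car by (simp add: G.m_assoc)
  then show ?thesis using G.right_cancel car by (metis G.m_closed)
qed

definition finsupp_Ob :: "('o \<Rightarrow> int) \<Rightarrow> bool" where
  "finsupp_Ob u \<longleftrightarrow> finite {x. u x \<noteq> 0} \<and> {x. u x \<noteq> 0} \<subseteq> Ob C"

definition cls_comb :: "('o \<Rightarrow> int) \<Rightarrow> 'o set" where
  "cls_comb u = finprod G (\<lambda>X. cls X [^]\<^bsub>G\<^esub> u X) {x. u x \<noteq> 0}"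

lemma cls_int_pow_carrier: "X \<in> Ob C \<Longrightarrow> cls X [^]\<^bsub>G\<^esub> (k::int) \<in> carrier G"
  using cls_carrier by simp

lemma cls_comb_superset:
  assumes u: "finsupp_Ob u" and A: "finite A" "{x. u x \<noteq> 0} \<subseteq> A" "A \<subseteq> Ob C"
  shows "cls_comb u = finprod G (\<lambda>X. cls X [^]\<^bsub>G\<^esub> u X) A"
  unfolding cls_comb_def
  by (rule G.finprod_mono_neutral_cong_left) (use A cls_int_pow_carrier in auto)

lemma finsupp_Ob_add:
  assumes "finsupp_Ob u" "finsupp_Ob w"
  shows "finsupp_Ob (\<lambda>x. u x + w x)"
proof -
  have sub: "{x. u x + w x \<noteq> 0} \<subseteq> {x. u x \<noteq> 0} \<union> {x. w x \<noteq> 0}" by auto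
  show ?thesis using assms unfolding finsupp_Ob_def using finite_subset[OF sub] sub by blast
qed

lemma finsupp_Ob_scale: "finsupp_Ob u \<Longrightarrow> finsupp_Ob (\<lambda>x. k * u x)"
  unfolding finsupp_Ob_def by (rule conjI, rule finite_subset[of _ "{x. u x \<noteq> 0}"]) auto

lemma cls_comb_add:
  assumes u: "finsupp_Ob u" and w: "finsupp_Ob w"
  shows "cls_comb (\<lambda>x. u x + w x) = cls_comb u \<otimes>\<^bsub>G\<^esub> cls_comb w"
proof -
  let ?A = "{x. u x \<noteq> 0} \<union> {x. w x \<noteq> 0}"
  have A: "finite ?A" "?A \<subseteq> Ob C" using u w unfolding finsupp_Ob_def by auto
  have "cls_comb (\<lambda>x. u x + w x) = finprod G (\<lambda>X. cls X [^]\<^bsub>G\<^esub> (u X + w X)) ?A"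
    by (rule cls_comb_superset[OF finsupp_Ob_add[OF u w] A(1) _ A(2)]) auto
  also have "\<dots> = finprod G (\<lambda>X. cls X [^]\<^bsub>G\<^esub> u X \<otimes>\<^bsub>G\<^esub> cls X [^]\<^bsub>G\<^esub> w X) ?A"
    using A(2) cls_carrier by (intro G.finprod_cong') (auto simp: G.int_pow_mult)
  also have "\<dots> = finprod G (\<lambda>X. cls X [^]\<^bsub>G\<^esub> u X) ?A \<otimes>\<^bsub>G\<^esub>
      finprod G (\<lambda>X. cls X [^]\<^bsub>G\<^esub> w X) ?A"
    using A(2) cls_int_pow_carrier by (intro G.finprod_multf) auto
  also have "\<dots> = cls_comb u \<otimes>\<^bsub>G\<^esub> cls_comb w"
    using cls_comb_superset[OF u A(1) _ A(2)] cls_comb_superset[OF w A(1) _ A(2)] by auto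
  finally show ?thesis .
qed

lemma cls_comb_scale:
  assumes u: "finsupp_Ob u"
  shows "cls_comb (\<lambda>x. k * u x) = cls_comb u [^]\<^bsub>G\<^esub> k"
proof -
  let ?A = "{x. u x \<noteq> 0}"
  have A: "finite ?A" "?A \<subseteq> Ob C" using u unfolding finsupp_Ob_def by auto
  have "cls_comb (\<lambda>x. k * u x) = finprod G (\<lambda>X. cls X [^]\<^bsub>G\<^esub> (k * u X)) ?A"
    by (rule cls_comb_superset[OF finsupp_Ob_scale[OF u] A(1) _ A(2)]) auto
  also have "\<dots> = finprod G (\<lambda>X. (cls X [^]\<^bsub>G\<^esub> u X) [^]\<^bsub>G\<^esub> k) ?A"
    using A(2) cls_carrier by (intro G.finprod_cong') (auto simp: G.int_pow_pow mult.commute)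
  also have "\<dots> = cls_comb u [^]\<^bsub>G\<^esub> k"
    unfolding cls_comb_def using A(2) cls_int_pow_carrier by (intro G.finprod_int_pow A(1)) auto
  finally show ?thesis .
qed

lemma finsupp_Ob_idelta: "X \<in> Ob C \<Longrightarrow> finsupp_Ob (idelta X)"
  unfolding finsupp_Ob_def idelta_def by auto

lemma cls_comb_idelta: "X \<in> Ob C \<Longrightarrow> cls_comb (idelta X) = cls X"
proof -
  assume X: "X \<in> Ob C"
  have "{x. idelta X x \<noteq> 0} = {X}" unfolding idelta_def by auto
  then show ?thesis unfolding cls_comb_def using cls_carrier[OF X] by (simp add: idelta_def)
qed

lemma cls_comb_tri_rel:
  assumes d: "(f, g, h) \<in> dtri C"
  shows "cls_comb (\<lambda>x. idelta (src C f) x - idelta (src C g) x + idelta (src C h) x) = \<one>\<^bsub>G\<^esub>"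
proof -
  let ?X = "src C f" and ?Y = "src C g" and ?Z = "src C h"
  let ?v = "\<lambda>x. idelta ?X x + (-1) * idelta ?Y x"
  have ob: "?X \<in> Ob C" "?Y \<in> Ob C" "?Z \<in> Ob C" using dtri_ob[OF d] by auto
  then have c: "cls ?X \<in> carrier G" "cls ?Y \<in> carrier G" "cls ?Z \<in> carrier G"
    using cls_carrier by auto
  have eq: "(\<lambda>x. idelta ?X x - idelta ?Y x + idelta ?Z x) = (\<lambda>x. ?v x + idelta ?Z x)"
    by simp
  have fin: "finsupp_Ob ?v" using finsupp_Ob_add finsupp_Ob_scale finsupp_Ob_idelta ob by blast
  have p1: "cls_comb (\<lambda>x. ?v x + idelta ?Z x) = cls_comb ?v \<otimes>\<^bsub>G\<^esub> cls_comb (idelta ?Z)"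
    by (rule cls_comb_add[OF fin finsupp_Ob_idelta[OF ob(3)]])
  have p2: "cls_comb ?v = cls_comb (idelta ?X) \<otimes>\<^bsub>G\<^esub> cls_comb (\<lambda>x. (-1) * idelta ?Y x)"
    using finsupp_Ob_idelta[OF ob(1)] finsupp_Ob_scale[OF finsupp_Ob_idelta[OF ob(2)]]
    by (rule cls_comb_add)
  have p3: "cls_comb (\<lambda>x. (-1) * idelta ?Y x) = cls_comb (idelta ?Y) [^]\<^bsub>G\<^esub> (-1::int)"
    by (rule cls_comb_scale[OF finsupp_Ob_idelta[OF ob(2)]])
  have "cls_comb (\<lambda>x. idelta ?X x - idelta ?Y x + idelta ?Z x)
      = (cls ?X \<otimes>\<^bsub>G\<^esub> cls ?Y [^]\<^bsub>G\<^esub> (-1::int)) \<otimes>\<^bsub>G\<^esub> cls ?Z"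
    unfolding eq p1 p2 p3 cls_comb_idelta[OF ob(1)] cls_comb_idelta[OF ob(2)]
      cls_comb_idelta[OF ob(3)] ..
  also have "\<dots> = \<one>\<^bsub>G\<^esub>"
    using cls_dtri[OF d] c by (simp add: G.int_pow_neg G.inv_mult G.m_assoc[symmetric])
  finally show ?thesis .
qed

lemma generator_integral:
  assumes "s \<in> delta ` B \<union> tri_rels C"
  shows "\<exists>u. s = (\<lambda>x. of_int (u x)) \<and> finsupp_Ob u \<and> cls_comb u = \<one>\<^bsub>G\<^esub>"
  using assms
proof
  assume "s \<in> delta ` B"
  then obtain X where X: "X \<in> B" "X \<in> Ob C" "s = delta X" using B_Ob by blast
  then show ?thesis
    using finsupp_Ob_idelta cls_comb_idelta of_int_idelta[of X, symmetric] cls_eq_one_iff by blast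
next
  assume "s \<in> tri_rels C"
  then obtain f g h where d: "(f, g, h) \<in> dtri C"
    and s: "s = (\<lambda>x. delta (src C f) x - delta (src C g) x + delta (src C h) x)"
    unfolding tri_rels_def by blast
  let ?u = "\<lambda>x. idelta (src C f) x - idelta (src C g) x + idelta (src C h) x"
  have sub: "{x. ?u x \<noteq> 0} \<subseteq> {src C f, src C g, src C h}" by (auto simp: idelta_def)
  then have "finsupp_Ob ?u"
    unfolding finsupp_Ob_def using finite_subset[OF sub] dtri_ob[OF d] by auto
  moreover have "s = (\<lambda>x. of_int (?u x))"
    using s by (auto simp: fun_eq_iff idelta_def delta_def)
  ultimately show ?thesis using cls_comb_tri_rel[OF d] by (intro exI[of _ ?u]) blast
qed

lemma span_integral_multiple:
  assumes v: "v \<in> qfun.span (delta ` B \<union> tri_rels C)"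
  shows "\<exists>N u. N > (0::int) \<and> (\<lambda>x. of_int N * v x) = (\<lambda>x. of_int (u x)) \<and>
    finsupp_Ob u \<and> cls_comb u = \<one>\<^bsub>G\<^esub>"
  using v
proof (induct rule: qfun.span_induct_alt)
  case base
  have "finsupp_Ob (\<lambda>x. 0)" "cls_comb (\<lambda>x. 0) = \<one>\<^bsub>G\<^esub>"
    by (auto simp: finsupp_Ob_def cls_comb_def)
  then show ?case by (intro exI[of _ 1] exI[of _ "\<lambda>x. 0"]) simp
next
  case (step c s y)
  obtain N u where
    Nu: "N > 0" "(\<lambda>x. of_int N * y x) = (\<lambda>x. of_int (u x))" "finsupp_Ob u" "cls_comb u = \<one>\<^bsub>G\<^esub>"
    using step by blast
  obtain w where w: "s = (\<lambda>x. of_int (w x))" "finsupp_Ob w" "cls_comb w = \<one>\<^bsub>G\<^esub>"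
    using generator_integral[OF step(1)] by blast
  obtain a b where ab: "quotient_of c = (a, b)" by (cases "quotient_of c")
  let ?u = "\<lambda>x. (N * a) * w x + b * u x"
  have "\<And>x. of_int N * y x = of_int (u x)" using Nu(2) by meson
  then have "(\<lambda>x. of_int (b * N) * ((\<lambda>x. c * s x) + y) x) = (\<lambda>x. of_int (?u x))"
    using quotient_of_clear_denominator[OF ab] w(1) by (simp add: fun_eq_iff)
  moreover have "finsupp_Ob ?u" using finsupp_Ob_add finsupp_Ob_scale w(2) Nu(3) by blast
  moreover have "cls_comb ?u = \<one>\<^bsub>G\<^esub>"
    using cls_comb_add[OF finsupp_Ob_scale[OF w(2)] finsupp_Ob_scale[OF Nu(3)]]
      cls_comb_scale[OF w(2)] cls_comb_scale[OF Nu(3)] w(3) Nu(4)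
    by simp
  moreover have "b * N > 0" using ab quotient_of_denom_pos Nu(1) by simp
  ultimately show ?case by (intro exI[of _ "b * N"] exI[of _ ?u] conjI)
qed

lemma npow_cls: "U \<in> Ob C \<Longrightarrow> \<exists>S. S \<in> Ob C \<and> npow C U n S \<and> cls S = cls U [^]\<^bsub>G\<^esub> n"
proof (induct n)
  case 0
  then show ?case using Z0 G_one by auto
next
  case (Suc n)
  then obtain T where T: "T \<in> Ob C" "npow C U n T" "cls T = cls U [^]\<^bsub>G\<^esub> n" by blast
  have "cls (bsum T U) = cls U [^]\<^bsub>G\<^esub> Suc n"
    using cls_biprod[OF bsum_biprod[OF T(1) Suc(2)]] T by simp
  then show ?case using bsum_biprod[OF T(1) Suc(2)] bsum_ob T Suc(2) by auto
qed

lemma delta_in_HB_imp_B: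
  assumes rad: "radical C B" and U: "U \<in> Ob C" and v: "delta U \<in> gimgQ C B"
  shows "U \<in> B"
proof -
  have "delta U \<in> qfun.span (delta ` B \<union> tri_rels C)" using v unfolding gimgQ_eq_span .
  then obtain N u where Nu: "N > 0" "(\<lambda>x. of_int N * delta U x) = (\<lambda>x. of_int (u x))"
    "finsupp_Ob u" "cls_comb u = \<one>\<^bsub>G\<^esub>"
    using span_integral_multiple by blast
  have "u = (\<lambda>x. N * idelta U x)"
  proof
    fix x have "of_int N * delta U x = (of_int (u x) :: rat)" using Nu(2) by meson
    then show "u x = N * idelta U x" unfolding delta_def idelta_def by (cases "x = U") auto
  qed
  then have "cls_comb u = cls U [^]\<^bsub>G\<^esub> N"
    using cls_comb_scale[OF finsupp_Ob_idelta[OF U]] cls_comb_idelta[OF U] by simp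
  then have e: "cls U [^]\<^bsub>G\<^esub> nat N = \<one>\<^bsub>G\<^esub>"
    using Nu(1,4) by (metis int_pow_int int_nat_eq less_imp_le)
  obtain S where S: "S \<in> Ob C" "npow C U (nat N) S" "cls S = cls U [^]\<^bsub>G\<^esub> nat N"
    using npow_cls[OF U] by blast
  have "S \<in> B" using cls_eq_one_iff S e by auto
  moreover have "nat N \<ge> 1" using Nu(1) by simp
  ultimately show ?thesis using rad U S unfolding radical_def by blast
qed

section \<open>The maximal element of \<open>I(H)\<close>\<close>

abbreviation HB :: "('o \<Rightarrow> rat) set" where
  "HB \<equiv> gimgQ C B"

lemma tri_rel_in_HB:
  "(f, g, h) \<in> dtri C \<Longrightarrow> (\<lambda>x. delta (src C f) x - delta (src C g) x + delta (src C h) x) \<in> HB"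
  unfolding gimgQ_eq_span by (rule qfun.span_base) (auto simp: tri_rels_def)

lemmas dtri_delta_in_HB =
  qfun_span_two_of_three[OF tri_rel_in_HB[unfolded gimgQ_eq_span], folded gimgQ_eq_span]

lemma delta_zero_obj_in_HB:
  assumes t: "(idm C X, mzero C X Z, mzero C Z (shO C X)) \<in> dtri C"
    and Z: "zero_obj C Z" and X: "X \<in> Ob C"
  shows "delta Z \<in> HB"
proof -
  have ZO: "Z \<in> Ob C" using Z zero_obj_ob by blast
  have s: "src C (idm C X) = X" "src C (mzero C X Z) = X" "src C (mzero C Z (shO C X)) = Z"
    using X ZO shift_ob by (simp_all add: mor_simps)
  have "(\<lambda>x. delta X x - delta X x + delta Z x) \<in> HB" using tri_rel_in_HB[OF t] s by simp
  moreover have "(\<lambda>x. delta X x - delta X x + delta Z x) = delta Z" by auto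
  ultimately show ?thesis by simp
qed

definition DH :: "'o set" where
  "DH = {U \<in> Ob C. delta U \<in> HB}"

lemma B_subset_DH: "B \<subseteq> DH"
  unfolding DH_def gimgQ_eq_span using B_Ob by (auto intro: qfun.span_base)

lemma tri_sub_DH: "tri_sub C DH"
  unfolding tri_sub_def
proof (intro conjI allI impI ballI)
  show "DH \<subseteq> Ob C" unfolding DH_def by blast
  show "\<exists>Z\<in>DH. zero_obj C Z" using B_subset_DH Z0 by blast
next
  fix X Y assume X: "X \<in> DH" and Y: "Y \<in> Ob C" and i: "isomorphic C X Y"
  obtain f where f: "f \<in> Hom X Y" "iso_mor C f" using i unfolding isomorphic_def by blast
  have XO: "X \<in> Ob C" using X unfolding DH_def by blast
  obtain Z where Z: "zero_obj C Z" and t: "(idm C X, mzero C X Z, mzero C Z (shO C X)) \<in> dtri C"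
    using dtri_id[OF XO] by blast
  have d: "(f, mzero C Y Z, mzero C Z (shO C X)) \<in> dtri C" using dtri_iso_zero[OF f Z t] .
  have s: "src C f = X" "src C (mzero C Y Z) = Y" "src C (mzero C Z (shO C X)) = Z"
    using f Y Z zero_obj_ob XO shift_ob by (auto simp: hom_iff mor_simps)
  have "delta Y \<in> HB"
    using dtri_delta_in_HB(2)[OF d] s delta_zero_obj_in_HB[OF t Z XO] X unfolding DH_def by simp
  then show "Y \<in> DH" using Y unfolding DH_def by blast
next
  fix X assume XO: "X \<in> Ob C"
  obtain Z where Z: "zero_obj C Z" and t: "(idm C X, mzero C X Z, mzero C Z (shO C X)) \<in> dtri C"
    using dtri_id[OF XO] by blast
  have d: "(mzero C X Z, mzero C Z (shO C X), mneg C (shM C (idm C X))) \<in> dtri C"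
    using dtri_rotate[OF t] .
  have s: "src C (mzero C X Z) = X" "src C (mzero C Z (shO C X)) = Z"
    "src C (mneg C (shM C (idm C X))) = shO C X"
    using XO Z zero_obj_ob shift_ob src_dtri_rotate[OF t] src_id by (auto simp: mor_simps)
  have zi: "delta Z \<in> HB" using delta_zero_obj_in_HB[OF t Z XO] .
  have "delta X \<in> HB \<longleftrightarrow> delta (shO C X) \<in> HB"
    using dtri_delta_in_HB(1)[OF d] dtri_delta_in_HB(3)[OF d] s zi by auto
  then show "X \<in> DH \<longleftrightarrow> shO C X \<in> DH" using XO shift_ob unfolding DH_def by auto
next
  fix f g h assume a0: "(f, g, h) \<in> dtri C \<and> src C f \<in> DH \<and> src C g \<in> DH"
  then have d: "(f, g, h) \<in> dtri C" and a: "src C f \<in> DH" "src C g \<in> DH" by auto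
  have "delta (src C h) \<in> HB" using dtri_delta_in_HB(1)[OF d] a unfolding DH_def by blast
  then show "src C h \<in> DH" using dtri_ob[OF d] unfolding DH_def by blast
qed

lemma dense_sub_DH: "dense_sub C DH"
  unfolding dense_sub_def using tri_sub_DH B_dense B_subset_DH by blast

lemma gimgQ_DH: "gimgQ C DH = HB"
proof
  have "delta ` DH \<union> tri_rels C \<subseteq> qfun.span (delta ` B \<union> tri_rels C)"
    using qfun.span_superset unfolding DH_def gimgQ_eq_span by blast
  then show "gimgQ C DH \<subseteq> HB" unfolding gimgQ_eq_span using qfun.span_mono qfun.span_span by metis
  show "HB \<subseteq> gimgQ C DH" unfolding gimgQ_eq_span using B_subset_DH by (intro qfun.span_mono) blast
qed

lemma maximal_DH: "maximal_in (Iset C HB) DH"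
  unfolding maximal_in_def
proof (intro conjI ballI impI)
  show "DH \<in> Iset C HB" unfolding Iset_def using dense_sub_DH gimgQ_DH by blast
next
  fix D' assume D': "D' \<in> Iset C HB" and sub: "DH \<subseteq> D'"
  have "D' \<subseteq> DH"
  proof
    fix U assume U: "U \<in> D'"
    have "dense_sub C D'" "gimgQ C D' = HB" using D' unfolding Iset_def by auto
    then have "U \<in> Ob C" "delta U \<in> HB"
      using U unfolding dense_sub_def tri_sub_def gimgQ_eq_span by (auto intro: qfun.span_base)
    then show "U \<in> DH" unfolding DH_def by blast
  qed
  then show "D' = DH" using sub by blast
qed

end

theorem proposition3p11:
  fixes C :: "('o, 'm) tricat" and B D :: "'o set"
  assumes "triangulated C"
    and "dense_sub C B" and "radical C B"
    and "maximal_in (Iset C (gimgQ C B)) D"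
    and "\<forall>D'. maximal_in (Iset C (gimgQ C B)) D' \<longrightarrow> D' = D"
  shows "B = D"
proof -
  interpret dense_subcategory C B
    using assms(1,2) by unfold_locales
  \<comment> \<open>The uniqueness hypothesis alone identifies \<open>D\<close>.\<close>
  have "DH = D" using assms(5) maximal_DH by blast
  moreover have "DH \<subseteq> B" using delta_in_HB_imp_B[OF assms(3)] unfolding DH_def by blast
  ultimately show ?thesis using B_subset_DH by blast
qed

end
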